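(* Suppose $K\supset\mathbb{Q}$, let $\mathcal{R}$ be a filtered $K$-SAC satisfying conditions (C2) and (C3), and let $D,D'$ be derivations of $\mathcal{R}$ each satisfying conditions (i)–(iii) below. Then: (1) if $[D,D']=0$, then $D+D'$ satisfies (i)–(iii) and $\exp(D+D')=\exp(D)\exp(D')$; (2) $\exp(D)\in\operatorname{Aut}\mathcal{R}$; (3) if $\exp(D)=\exp(D')$ in $\operatorname{Aut}\mathcal{R}$, then $D=D'$. Conditions: (i) $D\in F_0\operatorname{Der}\mathcal{R}$; (ii) for any objects $p_0,p_1$ there is a positive integer $\nu$ with $D^\nu=0$ on $\mathrm{gr}_1\mathcal{R}(p_0,p_1)=F_1\mathcal{R}(p_0,p_1)/F_2\mathcal{R}(p_0,p_1)$; (iii) $D(\mathcal{R}(p_0,p_1))\subset F_1\mathcal{R}(p_0,p_1)$ for all $p_0,p_1$.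
   Context: $K$ is a commutative ring with unit. A $K$-SAC is a small additive category $\mathcal{R}$ whose hom-sets $\mathcal{R}(p_0,p_1)$ are $K$-modules with $K$-bilinear multiplication $uv:=v\circ u$ ($u\in\mathcal{R}(p_0,p_1)$, $v\in\mathcal{R}(p_1,p_2)$), and such that whenever $\mathcal{R}(p_0,p_1)\ne0$ it contains an isomorphism. It is filtered if each $\mathcal{R}(p_0,p_1)$ has $K$-submodules $F_0=\mathcal{R}(p_0,p_1)\supset F_1\supset F_2\supset\cdots$ with $F_{n_1}\mathcal{R}(p_0,p_1)\cdot F_{n_2}\mathcal{R}(p_1,p_2)\subset F_{n_1+n_2}\mathcal{R}(p_0,p_2)$; $F_n=\mathcal{R}$ for $n<0$. (C2): for every object $q$ and $n\ge1$, the sum of multiplication and inclusion $F_1\mathcal{R}(q,q)^{\otimes n}\oplus F_{n+1}\mathcal{R}(q,q)\to F_n\mathcal{R}(q,q)$ is surjective. (C3): $\mathcal{R}(q,q)\to\varprojlim_n\mathcal{R}(q,q)/F_n\mathcal{R}(q,q)$ is an isomorphism for every $q$. A derivation is a family of $K$-linear maps $D:\mathcal{R}(p_0,p_1)\to\mathcal{R}(p_0,p_1)$ with $D(uv)=(Du)v+u(Dv)$; $F_n\operatorname{Der}\mathcal{R}$ is the set of derivations with $D(F_l\mathcal{R}(p_0,p_1))\subset F_{l+n}\mathcal{R}(p_0,p_1)$ for all $p_0,p_1$ and $l\ge0$. Under (C2), (C3) and (i)–(iii), $\exp(D)=\sum_{k\ge0}D^k/k!$ converges on each $\mathcal{R}(p_0,p_1)$.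 $\operatorname{Aut}\mathcal{R}$ is the group of functors $\mathcal{R}\to\mathcal{R}$ that are the identity on objects and $K$-linear isomorphisms on each $\mathcal{R}(p_0,p_1)$. *)

theory Defs
  imports Main
begin

text \<open>Morphisms live in a common type 'm;
  all operations are indexed by the source/target objects.
  mul p0 p1 p2 u v is the product uv = v o u for u : p0 -> p1, v : p1 -> p2.\<close>

record ('o, 'k, 'm) sac =
  Ob   :: "'o set"
  Hom  :: "'o \<Rightarrow> 'o \<Rightarrow> 'm set"
  add  :: "'o \<Rightarrow> 'o \<Rightarrow> 'm \<Rightarrow> 'm \<Rightarrow> 'm"
  zer  :: "'o \<Rightarrow> 'o \<Rightarrow> 'm"
  smult :: "'o \<Rightarrow> 'o \<Rightarrow> 'k \<Rightarrow> 'm \<Rightarrow> 'm"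
  mul  :: "'o \<Rightarrow> 'o \<Rightarrow> 'o \<Rightarrow> 'm \<Rightarrow> 'm \<Rightarrow> 'm"
  idm  :: "'o \<Rightarrow> 'm"
  Fil  :: "nat \<Rightarrow> 'o \<Rightarrow> 'o \<Rightarrow> 'm set"

definition kmodule_on ::
  "'m set \<Rightarrow> ('m \<Rightarrow> 'm \<Rightarrow> 'm) \<Rightarrow> 'm \<Rightarrow> ('k::comm_ring_1 \<Rightarrow> 'm \<Rightarrow> 'm) \<Rightarrow> bool" where
  "kmodule_on M ad z sm \<longleftrightarrow>
     z \<in> M \<and>
     (\<forall>x\<in>M. \<forall>y\<in>M. ad x y \<in> M) \<and>
     (\<forall>a. \<forall>x\<in>M. sm a x \<in> M) \<and>
     (\<forall>x\<in>M. \<forall>y\<in>M. \<forall>w\<in>M. ad (ad x y) w = ad x (ad y w)) \<and>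
     (\<forall>x\<in>M. \<forall>y\<in>M. ad x y = ad y x) \<and>
     (\<forall>x\<in>M. ad z x = x) \<and>
     (\<forall>x\<in>M. \<exists>y\<in>M. ad x y = z) \<and>
     (\<forall>a. \<forall>x\<in>M. \<forall>y\<in>M. sm a (ad x y) = ad (sm a x) (sm a y)) \<and>
     (\<forall>a b. \<forall>x\<in>M. sm (a + b) x = ad (sm a x) (sm b x)) \<and>
     (\<forall>a b. \<forall>x\<in>M. sm (a * b) x = sm a (sm b x)) \<and>
     (\<forall>x\<in>M. sm 1 x = x)"

definition submodule_on ::
  "'m set \<Rightarrow> ('m \<Rightarrow> 'm \<Rightarrow> 'm) \<Rightarrow> 'm \<Rightarrow> ('k \<Rightarrow> 'm \<Rightarrow> 'm) \<Rightarrow> 'm set \<Rightarrow> bool" where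
  "submodule_on M ad z sm N \<longleftrightarrow> N \<subseteq> M \<and> z \<in> N \<and>
     (\<forall>x\<in>N. \<forall>y\<in>N. ad x y \<in> N) \<and> (\<forall>a. \<forall>x\<in>N. sm a x \<in> N)"

definition is_KSAC :: "('o, 'k::comm_ring_1, 'm) sac \<Rightarrow> bool" where
  "is_KSAC R \<longleftrightarrow>
    (\<forall>p0\<in>Ob R. \<forall>p1\<in>Ob R.
        kmodule_on (Hom R p0 p1) (add R p0 p1) (zer R p0 p1) (smult R p0 p1)) \<and>
    (\<forall>p0\<in>Ob R. \<forall>p1\<in>Ob R. \<forall>p2\<in>Ob R. \<forall>u\<in>Hom R p0 p1. \<forall>v\<in>Hom R p1 p2.
        mul R p0 p1 p2 u v \<in> Hom R p0 p2) \<and>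
    (\<forall>p0\<in>Ob R. \<forall>p1\<in>Ob R. \<forall>p2\<in>Ob R. \<forall>p3\<in>Ob R.
       \<forall>u\<in>Hom R p0 p1. \<forall>v\<in>Hom R p1 p2. \<forall>w\<in>Hom R p2 p3.
        mul R p0 p2 p3 (mul R p0 p1 p2 u v) w = mul R p0 p1 p3 u (mul R p1 p2 p3 v w)) \<and>
    (\<forall>p\<in>Ob R. idm R p \<in> Hom R p p) \<and>
    (\<forall>p0\<in>Ob R. \<forall>p1\<in>Ob R. \<forall>u\<in>Hom R p0 p1.
        mul R p0 p0 p1 (idm R p0) u = u \<and> mul R p0 p1 p1 u (idm R p1) = u) \<and>
    (\<forall>p0\<in>Ob R. \<forall>p1\<in>Ob R. \<forall>p2\<in>Ob R. \<forall>u\<in>Hom R p0 p1. \<forall>u'\<in>Hom R p0 p1.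
       \<forall>v\<in>Hom R p1 p2. \<forall>v'\<in>Hom R p1 p2. \<forall>a.
        mul R p0 p1 p2 (add R p0 p1 u u') v
          = add R p0 p2 (mul R p0 p1 p2 u v) (mul R p0 p1 p2 u' v) \<and>
        mul R p0 p1 p2 u (add R p1 p2 v v')
          = add R p0 p2 (mul R p0 p1 p2 u v) (mul R p0 p1 p2 u v') \<and>
        mul R p0 p1 p2 (smult R p0 p1 a u) v = smult R p0 p2 a (mul R p0 p1 p2 u v) \<and>
        mul R p0 p1 p2 u (smult R p1 p2 a v) = smult R p0 p2 a (mul R p0 p1 p2 u v)) \<and>
    (\<forall>p0\<in>Ob R. \<forall>p1\<in>Ob R. Hom R p0 p1 \<noteq> {zer R p0 p1} \<longrightarrow>
        (\<exists>u\<in>Hom R p0 p1. \<exists>v\<in>Hom R p1 p0.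
           mul R p0 p1 p0 u v = idm R p0 \<and> mul R p1 p0 p1 v u = idm R p1))"

definition is_filtered :: "('o, 'k::comm_ring_1, 'm) sac \<Rightarrow> bool" where
  "is_filtered R \<longleftrightarrow>
    (\<forall>p0\<in>Ob R. \<forall>p1\<in>Ob R.
       Fil R 0 p0 p1 = Hom R p0 p1 \<and>
       (\<forall>n. submodule_on (Hom R p0 p1) (add R p0 p1) (zer R p0 p1) (smult R p0 p1) (Fil R n p0 p1)) \<and>
       (\<forall>n. Fil R (Suc n) p0 p1 \<subseteq> Fil R n p0 p1)) \<and>
    (\<forall>p0\<in>Ob R. \<forall>p1\<in>Ob R. \<forall>p2\<in>Ob R. \<forall>n1 n2. \<forall>u\<in>Fil R n1 p0 p1. \<forall>v\<in>Fil R n2 p1 p2.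
       mul R p0 p1 p2 u v \<in> Fil R (n1 + n2) p0 p2)"

definition hsub :: "('o, 'k::comm_ring_1, 'm) sac \<Rightarrow> 'o \<Rightarrow> 'o \<Rightarrow> 'm \<Rightarrow> 'm \<Rightarrow> 'm" where
  "hsub R p0 p1 x y = add R p0 p1 x (smult R p0 p1 (-1) y)"

fun lprod :: "('o, 'k, 'm) sac \<Rightarrow> 'o \<Rightarrow> 'm list \<Rightarrow> 'm" where
  "lprod R q [] = idm R q"
| "lprod R q [u] = u"
| "lprod R q (u # us) = mul R q q q u (lprod R q us)"

inductive_set finsums :: "('o, 'k, 'm) sac \<Rightarrow> 'o \<Rightarrow> 'o \<Rightarrow> 'm set \<Rightarrow> 'm set"
  for R p0 p1 S where
  "zer R p0 p1 \<in> finsums R p0 p1 S"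
| "x \<in> S \<Longrightarrow> y \<in> finsums R p0 p1 S \<Longrightarrow> add R p0 p1 x y \<in> finsums R p0 p1 S"

text \<open>(C2): the image of the multiplication map from the n-th tensor power of F1 R(q,q)
  is the set of finite sums of products u1...un with ui in F1.\<close>
definition cond_C2 :: "('o, 'k::comm_ring_1, 'm) sac \<Rightarrow> bool" where
  "cond_C2 R \<longleftrightarrow> (\<forall>q\<in>Ob R. \<forall>n\<ge>1. \<forall>x\<in>Fil R n q q.
     \<exists>s\<in>finsums R q q {lprod R q us | us. length us = n \<and> set us \<subseteq> Fil R 1 q q}.
     \<exists>y\<in>Fil R (n + 1) q q. x = add R q q s y)"

text \<open>(C3): R(q,q) -> lim R(q,q)/F_n R(q,q) is bijective.\<close>
definition cond_C3 :: "('o, 'k::comm_ring_1, 'm) sac \<Rightarrow> bool" where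
  "cond_C3 R \<longleftrightarrow> (\<forall>q\<in>Ob R.
     (\<forall>x\<in>Hom R q q. (\<forall>n. x \<in> Fil R n q q) \<longrightarrow> x = zer R q q) \<and>
     (\<forall>a::nat \<Rightarrow> 'm. (\<forall>n. a n \<in> Hom R q q) \<and>
         (\<forall>n m. n \<le> m \<longrightarrow> hsub R q q (a m) (a n) \<in> Fil R n q q) \<longrightarrow>
       (\<exists>x\<in>Hom R q q. \<forall>n. hsub R q q x (a n) \<in> Fil R n q q)))"

type_synonym ('o, 'm) famap = "'o \<Rightarrow> 'o \<Rightarrow> 'm \<Rightarrow> 'm"

definition is_klinear_fam :: "('o, 'k::comm_ring_1, 'm) sac \<Rightarrow> ('o, 'm) famap \<Rightarrow> bool" where
  "is_klinear_fam R D \<longleftrightarrow> (\<forall>p0\<in>Ob R. \<forall>p1\<in>Ob R.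
     (\<forall>u\<in>Hom R p0 p1. D p0 p1 u \<in> Hom R p0 p1) \<and>
     (\<forall>u\<in>Hom R p0 p1. \<forall>v\<in>Hom R p0 p1.
        D p0 p1 (add R p0 p1 u v) = add R p0 p1 (D p0 p1 u) (D p0 p1 v)) \<and>
     (\<forall>a. \<forall>u\<in>Hom R p0 p1. D p0 p1 (smult R p0 p1 a u) = smult R p0 p1 a (D p0 p1 u)))"

definition is_derivation :: "('o, 'k::comm_ring_1, 'm) sac \<Rightarrow> ('o, 'm) famap \<Rightarrow> bool" where
  "is_derivation R D \<longleftrightarrow> is_klinear_fam R D \<and>
     (\<forall>p0\<in>Ob R. \<forall>p1\<in>Ob R. \<forall>p2\<in>Ob R. \<forall>u\<in>Hom R p0 p1. \<forall>v\<in>Hom R p1 p2.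
        D p0 p2 (mul R p0 p1 p2 u v)
          = add R p0 p2 (mul R p0 p1 p2 (D p0 p1 u) v) (mul R p0 p1 p2 u (D p1 p2 v)))"

definition in_FDer :: "('o, 'k::comm_ring_1, 'm) sac \<Rightarrow> nat \<Rightarrow> ('o, 'm) famap \<Rightarrow> bool" where
  "in_FDer R n D \<longleftrightarrow> is_derivation R D \<and>
     (\<forall>p0\<in>Ob R. \<forall>p1\<in>Ob R. \<forall>l. \<forall>u\<in>Fil R l p0 p1. D p0 p1 u \<in> Fil R (l + n) p0 p1)"

definition cond_i_iii :: "('o, 'k::comm_ring_1, 'm) sac \<Rightarrow> ('o, 'm) famap \<Rightarrow> bool" where
  "cond_i_iii R D \<longleftrightarrow>
     in_FDer R 0 D \<and>
     (\<forall>p0\<in>Ob R. \<forall>p1\<in>Ob R. \<exists>\<nu>::nat. \<nu> > 0 \<and>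
         (\<forall>u\<in>Fil R 1 p0 p1. (D p0 p1 ^^ \<nu>) u \<in> Fil R 2 p0 p1)) \<and>
     (\<forall>p0\<in>Ob R. \<forall>p1\<in>Ob R. \<forall>u\<in>Hom R p0 p1. D p0 p1 u \<in> Fil R 1 p0 p1)"

definition der_add :: "('o, 'k, 'm) sac \<Rightarrow> ('o, 'm) famap \<Rightarrow> ('o, 'm) famap \<Rightarrow> ('o, 'm) famap" where
  "der_add R D D' = (\<lambda>p0 p1 u. add R p0 p1 (D p0 p1 u) (D' p0 p1 u))"

definition der_commute :: "('o, 'k, 'm) sac \<Rightarrow> ('o, 'm) famap \<Rightarrow> ('o, 'm) famap \<Rightarrow> bool" where
  "der_commute R D D' \<longleftrightarrow> (\<forall>p0\<in>Ob R. \<forall>p1\<in>Ob R. \<forall>u\<in>Hom R p0 p1.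
     D p0 p1 (D' p0 p1 u) = D' p0 p1 (D p0 p1 u))"

text \<open>1/n in K (for n invertible in K)\<close>
definition inv_nat :: "nat \<Rightarrow> 'k::comm_ring_1" where
  "inv_nat n = (SOME r. of_nat n * r = 1)"

fun exp_psum :: "('o, 'k::comm_ring_1, 'm) sac \<Rightarrow> ('o, 'm) famap \<Rightarrow> 'o \<Rightarrow> 'o \<Rightarrow> 'm \<Rightarrow> nat \<Rightarrow> 'm" where
  "exp_psum R D p0 p1 u 0 = zer R p0 p1"
| "exp_psum R D p0 p1 u (Suc N) =
     add R p0 p1 (exp_psum R D p0 p1 u N) (smult R p0 p1 (inv_nat (fact N)) ((D p0 p1 ^^ N) u))"

definition fil_converges_to :: "('o, 'k::comm_ring_1, 'm) sac \<Rightarrow> 'o \<Rightarrow> 'o \<Rightarrow> (nat \<Rightarrow> 'm) \<Rightarrow> 'm \<Rightarrow> bool" where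
  "fil_converges_to R p0 p1 s x \<longleftrightarrow>
     (\<forall>n. \<exists>N0. \<forall>N\<ge>N0. hsub R p0 p1 (s N) x \<in> Fil R n p0 p1)"

definition der_exp :: "('o, 'k::comm_ring_1, 'm) sac \<Rightarrow> ('o, 'm) famap \<Rightarrow> ('o, 'm) famap" where
  "der_exp R D = (\<lambda>p0 p1 u. THE x. x \<in> Hom R p0 p1 \<and>
      fil_converges_to R p0 p1 (exp_psum R D p0 p1 u) x)"

text \<open>Aut R: functors identity on objects, K-linear isomorphisms on each hom-module\<close>
definition is_Aut :: "('o, 'k::comm_ring_1, 'm) sac \<Rightarrow> ('o, 'm) famap \<Rightarrow> bool" where
  "is_Aut R F \<longleftrightarrow> is_klinear_fam R F \<and>
     (\<forall>p0\<in>Ob R. \<forall>p1\<in>Ob R. bij_betw (F p0 p1) (Hom R p0 p1) (Hom R p0 p1)) \<and>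
     (\<forall>p0\<in>Ob R. \<forall>p1\<in>Ob R. \<forall>p2\<in>Ob R. \<forall>u\<in>Hom R p0 p1. \<forall>v\<in>Hom R p1 p2.
        F p0 p2 (mul R p0 p1 p2 u v) = mul R p0 p1 p2 (F p0 p1 u) (F p1 p2 v)) \<and>
     (\<forall>p\<in>Ob R. F p p (idm R p) = idm R p)"

end

theory Submission
  imports Defs "HOL-Algebra.Ring"
begin

text \<open>
  By (C2), every element of \<open>F\<^sub>l R(q, q)\<close> is a sum of \<open>l\<close>-fold products of elements of
  \<open>F\<^sub>1\<close> modulo \<open>F\<^sub>l\<^sub>+\<^sub>1\<close>, so the Leibniz rule and (ii) make \<open>D\<close> nilpotent on every
  \<open>gr\<^sub>l\<close>; transported along the isomorphisms of the K-SAC, the powers of \<open>D\<close> tend to \<open>0\<close> in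
  the filtration topology and, by completeness (C3), \<open>exp D = \<Sum> D\<^sup>k/k!\<close> converges.
  The Leibniz rule also turns products of two exponential series into Cauchy products:
  \<open>exp D (u v) = exp D u \<cdot> exp D v\<close>, and \<open>exp (D + D') = exp D \<circ> exp D'\<close> for commuting
  \<open>D, D'\<close>. Applied to \<open>a D\<close> and \<open>b D\<close> the latter gives \<open>exp ((a + b) D) = exp (a D) \<circ> exp (b D)\<close>,
  so \<open>exp (-D)\<close> inverts \<open>exp D\<close>.
  If \<open>exp D = exp D'\<close>, then \<open>exp (m D) = exp (m D')\<close> for all \<open>m \<in> \<nat>\<close>, hence
  \<open>\<Sum>\<^sub>k\<^sub><\<^sub>N m\<^sup>k (D\<^sup>k u - D'\<^sup>k u)/k! \<in> F\<^sub>n\<close> for one \<open>N\<close> and all \<open>m\<close>; as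
  positive integers are invertible in \<open>K\<close>, a Vandermonde-type elimination puts every coefficient,
  in particular \<open>D u - D' u\<close>, into \<open>F\<^sub>n\<close> for every \<open>n\<close>, and \<open>D u = D' u\<close> by (C3).
\<close>

lemma funpow_split: "a \<le> k \<Longrightarrow> (f ^^ k) x = (f ^^ (k - a)) ((f ^^ a) x)"
  by (metis funpow_add le_add_diff_inverse2 o_apply)

lemma additive_finsum:
  assumes G: "abelian_group G" and H: "abelian_group H"
    and L: "\<And>x y. x \<in> carrier G \<Longrightarrow> y \<in> carrier G \<Longrightarrow> L (x \<oplus>\<^bsub>G\<^esub> y) = L x \<oplus>\<^bsub>H\<^esub> L y"
    and Lc: "\<And>x. x \<in> carrier G \<Longrightarrow> L x \<in> carrier H"
    and L0: "L \<zero>\<^bsub>G\<^esub> = \<zero>\<^bsub>H\<^esub>"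
    and fin: "finite A" and f: "f \<in> A \<rightarrow> carrier G"
  shows "L (finsum G f A) = finsum H (\<lambda>i. L (f i)) A"
  using fin f
proof (induction A rule: finite_induct)
  case empty then show ?case using G H L0 by (simp add: abelian_monoid.finsum_empty abelian_group.axioms)
next
  case (insert x F)
  interpret G: abelian_group G by fact
  interpret H: abelian_group H by fact
  have fc: "f \<in> F \<rightarrow> carrier G" "f x \<in> carrier G" using insert by auto
  have "L (finsum G f (insert x F)) = L (f x \<oplus>\<^bsub>G\<^esub> finsum G f F)"
    using insert fc by (simp add: G.finsum_insert)
  also have "\<dots> = L (f x) \<oplus>\<^bsub>H\<^esub> L (finsum G f F)"
    using L[OF fc(2) G.finsum_closed[OF fc(1)]] .
  also have "\<dots> = finsum H (\<lambda>i. L (f i)) (insert x F)"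
    using insert fc Lc by (subst H.finsum_insert) (auto simp: Pi_def)
  finally show ?case .
qed

locale kmodule = abelian_group G for G (structure) +
  fixes sm :: "'k::comm_ring_1 \<Rightarrow> 'a \<Rightarrow> 'a"
  assumes sm_closed [simp]: "x \<in> carrier G \<Longrightarrow> sm a x \<in> carrier G"
    and sm_add_right: "x \<in> carrier G \<Longrightarrow> y \<in> carrier G \<Longrightarrow> sm a (x \<oplus> y) = sm a x \<oplus> sm a y"
    and sm_add_left: "x \<in> carrier G \<Longrightarrow> sm (a + b) x = sm a x \<oplus> sm b x"
    and sm_mult: "x \<in> carrier G \<Longrightarrow> sm (a * b) x = sm a (sm b x)"
    and sm_one [simp]: "x \<in> carrier G \<Longrightarrow> sm 1 x = x"
begin

lemma sm_zero_left[simp]: "x \<in> carrier G \<Longrightarrow> sm 0 x = \<zero>"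
proof -
  assume x: "x \<in> carrier G"
  have "sm 0 x \<oplus> sm 0 x = sm 0 x \<oplus> \<zero>" using x sm_add_left[of x 0 0] by simp
  thus ?thesis using x by (metis a_comm add.r_cancel_one' sm_closed zero_closed)
qed

lemma sm_zero_right[simp]: "sm a \<zero> = \<zero>"
  by (metis mult_zero_right sm_mult sm_zero_left zero_closed)

lemma sm_minus_one: "x \<in> carrier G \<Longrightarrow> sm (-1) x = \<ominus> x"
proof -
  assume x: "x \<in> carrier G"
  have "sm (-1) x \<oplus> x = \<zero>" using x sm_add_left[of x "-1" 1] by simp
  thus ?thesis using x by (metis add.inv_equality sm_closed)
qed

lemma sm_a_inv: "x \<in> carrier G \<Longrightarrow> sm a (\<ominus> x) = \<ominus> sm a x"
  by (metis mult.commute sm_mult sm_minus_one sm_closed)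

lemma sm_minus: "x \<in> carrier G \<Longrightarrow> y \<in> carrier G \<Longrightarrow> sm a (x \<ominus> y) = sm a x \<ominus> sm a y"
  by (simp add: a_minus_def sm_add_right sm_a_inv)

lemma sm_finsum:
  "finite A \<Longrightarrow> f \<in> A \<rightarrow> carrier G \<Longrightarrow> sm a (finsum G f A) = finsum G (\<lambda>i. sm a (f i)) A"
  by (induction A rule: finite_induct) (simp_all add: finsum_insert sm_add_right Pi_def)

lemma sm_linear_combination_add:
  assumes "finite A" "\<And>k. b k \<in> carrier G"
  shows "finsum G (\<lambda>k. sm (c k) (b k)) A \<oplus> finsum G (\<lambda>k. sm (c' k) (b k)) A = finsum G (\<lambda>k. sm (c k + c' k) (b k)) A"
proof -
  have "finsum G (\<lambda>k. sm (c k + c' k) (b k)) A = finsum G (\<lambda>k. sm (c k) (b k) \<oplus> sm (c' k) (b k)) A"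
    by (rule finsum_cong') (use assms in \<open>auto simp: sm_add_left\<close>)
  also have "\<dots> = finsum G (\<lambda>k. sm (c k) (b k)) A \<oplus> finsum G (\<lambda>k. sm (c' k) (b k)) A"
    by (rule finsum_addf) (use assms in auto)
  finally show ?thesis by simp
qed

lemma sm_linear_combination:
  assumes "finite A" "\<And>k. b k \<in> carrier G"
  shows "sm a (finsum G (\<lambda>k. sm (c k) (b k)) A) = finsum G (\<lambda>k. sm (a * c k) (b k)) A"
proof -
  have "sm a (finsum G (\<lambda>k. sm (c k) (b k)) A) = finsum G (\<lambda>k. sm a (sm (c k) (b k))) A"
    by (rule sm_finsum) (use assms in auto)
  also have "\<dots> = finsum G (\<lambda>k. sm (a * c k) (b k)) A"
    by (rule finsum_cong') (use assms in \<open>auto simp: sm_mult\<close>)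
  finally show ?thesis .
qed

definition submodule :: "'a set \<Rightarrow> bool" where
  "submodule S \<longleftrightarrow> S \<subseteq> carrier G \<and> \<zero> \<in> S \<and> (\<forall>x\<in>S. \<forall>y\<in>S. x \<oplus> y \<in> S) \<and> (\<forall>a. \<forall>x\<in>S. sm a x \<in> S)"

lemma submoduleD:
  assumes "submodule S"
  shows "S \<subseteq> carrier G" "\<zero> \<in> S" "x\<in>S \<Longrightarrow> y\<in>S \<Longrightarrow> x \<oplus> y \<in> S" "x\<in>S \<Longrightarrow> sm a x \<in> S"
  using assms unfolding submodule_def by auto

lemma submodule_a_inv: "submodule S \<Longrightarrow> x \<in> S \<Longrightarrow> \<ominus> x \<in> S"
  by (metis sm_minus_one submoduleD(1,4) subsetD)

lemma submodule_minus: "submodule S \<Longrightarrow> x \<in> S \<Longrightarrow> y \<in> S \<Longrightarrow> x \<ominus> y \<in> S"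
  by (simp add: a_minus_def submoduleD(3) submodule_a_inv)

lemma submodule_sm_cancel:
  assumes S: "submodule S" and x: "x \<in> carrier G" and r: "c * r = 1" and cx: "sm c x \<in> S"
  shows "x \<in> S"
proof -
  have "x = sm r (sm c x)" using x r by (simp add: sm_mult[symmetric] mult.commute)
  then show ?thesis using submoduleD(4)[OF S cx] by metis
qed

lemma submodule_finsum:
  assumes S: "submodule S"
  shows "finite A \<Longrightarrow> (\<And>i. i \<in> A \<Longrightarrow> f i \<in> S) \<Longrightarrow> finsum G f A \<in> S"
proof (induction A rule: finite_induct)
  case empty then show ?case using S by (simp add: submoduleD(2))
next
  case (insert x F)
  have "f \<in> insert x F \<rightarrow> carrier G" using insert submoduleD(1)[OF S] by blast
  then show ?case using insert S by (simp add: finsum_insert submoduleD(3))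
qed

lemma finsum_diff_in_submodule:
  assumes "finite A" "B \<subseteq> A" "f \<in> A \<rightarrow> carrier G" "submodule S" "\<And>i. i \<in> A - B \<Longrightarrow> f i \<in> S"
  shows "finsum G f A \<ominus> finsum G f B \<in> S"
proof -
  have fB: "finite B" using assms finite_subset by blast
  have A: "A = B \<union> (A - B)" using assms by blast
  have "finsum G f A = finsum G f B \<oplus> finsum G f (A - B)"
    using assms fB by (subst A, subst finsum_Un_disjoint) (auto simp: Pi_def)
  moreover have "finsum G f (A - B) \<in> S" using assms by (intro submodule_finsum) auto
  moreover have "finsum G f (A - B) \<in> carrier G" using assms by (intro finsum_closed) auto
  moreover have "finsum G f B \<in> carrier G" using assms by (intro finsum_closed) auto
  ultimately show ?thesis
    by (simp add: a_minus_def a_assoc a_comm[of "finsum G f B"] l_neg)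
qed

lemma submodule_cong_refl: "submodule S \<Longrightarrow> x \<in> carrier G \<Longrightarrow> x \<ominus> x \<in> S"
  by (simp add: a_minus_def r_neg submoduleD(2))

lemma submodule_cong_sym: "submodule S \<Longrightarrow> x \<in> carrier G \<Longrightarrow> y \<in> carrier G \<Longrightarrow> x \<ominus> y \<in> S \<Longrightarrow> y \<ominus> x \<in> S"
proof -
  assume h: "submodule S" "x \<in> carrier G" "y \<in> carrier G" "x \<ominus> y \<in> S"
  have "y \<ominus> x = \<ominus> (x \<ominus> y)" using h by (simp add: a_minus_def minus_add a_comm)
  thus ?thesis using h submodule_a_inv by simp
qed

lemma submodule_cong_trans: "submodule S \<Longrightarrow> x \<in> carrier G \<Longrightarrow> y \<in> carrier G \<Longrightarrow> z \<in> carrier G \<Longrightarrow>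
   x \<ominus> y \<in> S \<Longrightarrow> y \<ominus> z \<in> S \<Longrightarrow> x \<ominus> z \<in> S"
proof -
  assume S: "submodule S" and c: "x \<in> carrier G" "y \<in> carrier G" "z \<in> carrier G"
    and h: "x \<ominus> y \<in> S" "y \<ominus> z \<in> S"
  have "x \<ominus> z = (x \<ominus> y) \<oplus> (y \<ominus> z)" using c
    by (simp add: a_minus_def a_assoc) (simp add: a_assoc[symmetric] l_neg)
  thus ?thesis using h S submoduleD(3) by simp
qed

lemma submodule_cong_add: "submodule S \<Longrightarrow> x \<in> carrier G \<Longrightarrow> y \<in> carrier G \<Longrightarrow> x' \<in> carrier G \<Longrightarrow> y' \<in> carrier G \<Longrightarrow>
   x \<ominus> x' \<in> S \<Longrightarrow> y \<ominus> y' \<in> S \<Longrightarrow> (x \<oplus> y) \<ominus> (x' \<oplus> y') \<in> S"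
proof -
  assume S: "submodule S" and c: "x \<in> carrier G" "y \<in> carrier G" "x' \<in> carrier G" "y' \<in> carrier G"
    and h: "x \<ominus> x' \<in> S" "y \<ominus> y' \<in> S"
  have "(x \<oplus> y) \<ominus> (x' \<oplus> y') = (x \<ominus> x') \<oplus> (y \<ominus> y')" using c
    by (simp add: a_minus_def minus_add a_ac)
  thus ?thesis using h S submoduleD(3) by simp
qed

lemma submodule_cong_sm: "submodule S \<Longrightarrow> x \<in> carrier G \<Longrightarrow> y \<in> carrier G \<Longrightarrow> x \<ominus> y \<in> S \<Longrightarrow> sm a x \<ominus> sm a y \<in> S"
  by (metis sm_minus submoduleD(4))

lemma submodule_cong_add_small: "submodule S \<Longrightarrow> x \<in> carrier G \<Longrightarrow> y \<in> carrier G \<Longrightarrow> t \<in> carrier G \<Longrightarrow>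
   x \<ominus> y \<in> S \<Longrightarrow> t \<in> S \<Longrightarrow> (x \<oplus> t) \<ominus> y \<in> S"
proof -
  assume S: "submodule S" and c: "x \<in> carrier G" "y \<in> carrier G" "t \<in> carrier G"
    and h: "x \<ominus> y \<in> S" "t \<in> S"
  have "(x \<oplus> t) \<ominus> y = (x \<ominus> y) \<oplus> t" using c
    by (simp add: a_minus_def a_ac)
  thus ?thesis using h S submoduleD(3) by simp
qed

lemma minus_eq_zero_imp_eq: "x \<in> carrier G \<Longrightarrow> y \<in> carrier G \<Longrightarrow> x \<ominus> y = \<zero> \<Longrightarrow> x = y"
  by (metis a_minus_def add.inv_equality add.inv_inv a_inv_closed a_comm)

lemma finsum_binomial_Pascal:
  assumes tc: "\<And>a b. t a b \<in> carrier G"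
  shows "finsum G (\<lambda>k. sm (of_nat (Suc n choose k)) (t k (Suc n - k))) {..Suc n}
       = finsum G (\<lambda>k. sm (of_nat (n choose k)) (t (Suc k) (n - k))) {..n}
         \<oplus> finsum G (\<lambda>k. sm (of_nat (n choose k)) (t k (Suc n - k))) {..n}"
proof -
  let ?g = "\<lambda>k. sm (of_nat (Suc n choose k)) (t k (Suc n - k))"
  have "finsum G ?g {..Suc n} = finsum G (\<lambda>k. ?g (Suc k)) {..n} \<oplus> ?g 0"
    by (rule finsum_Suc2) (auto simp: tc)
  also have "finsum G (\<lambda>k. ?g (Suc k)) {..n} = finsum G (\<lambda>k. sm (of_nat (n choose k)) (t (Suc k) (n - k)) \<oplus> sm (of_nat (n choose Suc k)) (t (Suc k) (n - k))) {..n}"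
    by (rule finsum_cong') (auto simp: tc sm_add_left)
  also have "\<dots> = finsum G (\<lambda>k. sm (of_nat (n choose k)) (t (Suc k) (n - k))) {..n} \<oplus> finsum G (\<lambda>k. sm (of_nat (n choose Suc k)) (t (Suc k) (n - k))) {..n}"
    by (rule finsum_addf) (auto simp: tc)
  finally have R1: "finsum G ?g {..Suc n} = (finsum G (\<lambda>k. sm (of_nat (n choose k)) (t (Suc k) (n - k))) {..n} \<oplus>
     finsum G (\<lambda>k. sm (of_nat (n choose Suc k)) (t (Suc k) (n - k))) {..n}) \<oplus> ?g 0" .
  let ?h = "\<lambda>k. sm (of_nat (n choose k)) (t k (Suc n - k))"
  have "finsum G ?h {..Suc n} = finsum G (\<lambda>k. ?h (Suc k)) {..n} \<oplus> ?h 0"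
    by (rule finsum_Suc2) (auto simp: tc)
  moreover have "finsum G ?h {..Suc n} = ?h (Suc n) \<oplus> finsum G ?h {..n}"
    by (rule finsum_Suc) (auto simp: tc)
  moreover have "?h (Suc n) = \<zero>" using tc[of "Suc n" 0] by (simp add: binomial_eq_0)
  moreover have "finsum G (\<lambda>k. ?h (Suc k)) {..n} = finsum G (\<lambda>k. sm (of_nat (n choose Suc k)) (t (Suc k) (n - k))) {..n}"
    by (rule finsum_cong') (auto simp: tc)
  moreover have "?h 0 = ?g 0" by simp
  ultimately have R2: "finsum G (\<lambda>k. sm (of_nat (n choose Suc k)) (t (Suc k) (n - k))) {..n} \<oplus> ?g 0
      = finsum G ?h {..n}" using tc by (simp add: finsum_closed Pi_def)
  show ?thesis
    unfolding R1 R2[symmetric] by (simp add: a_assoc tc finsum_closed Pi_def)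
qed

lemma funpow_Leibniz:
  assumes Phi_add: "\<And>x y. x \<in> carrier G \<Longrightarrow> y \<in> carrier G \<Longrightarrow> Phi (x \<oplus> y) = Phi x \<oplus> Phi y"
    and Phi_sm: "\<And>x a. x \<in> carrier G \<Longrightarrow> Phi (sm a x) = sm a (Phi x)"
    and Phi_c: "\<And>x. x \<in> carrier G \<Longrightarrow> Phi x \<in> carrier G"
    and tc: "\<And>a b. t a b \<in> carrier G"
    and tP: "\<And>a b. Phi (t a b) = t (Suc a) b \<oplus> t a (Suc b)"
  shows "(Phi ^^ n) (t 0 0) = finsum G (\<lambda>k. sm (of_nat (n choose k)) (t k (n - k))) {..n}"
proof (induction n)
  case 0 then show ?case using tc by simp
next
  case (Suc n)
  have Phi0: "Phi \<zero> = \<zero>"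
  proof -
    have "Phi \<zero> = Phi (sm 0 \<zero>)" by simp
    also have "\<dots> = \<zero>" using Phi_sm[of \<zero> 0] Phi_c[of \<zero>] by simp
    finally show ?thesis .
  qed
  have ag: "abelian_group G" by (rule abelian_group_axioms)
  let ?f = "\<lambda>k. sm (of_nat (n choose k)) (t k (n - k))"
  have "(Phi ^^ Suc n) (t 0 0) = Phi (finsum G ?f {..n})" using Suc by simp
  also have "\<dots> = finsum G (\<lambda>k. Phi (?f k)) {..n}"
    by (rule additive_finsum[OF ag ag Phi_add Phi_c Phi0]) (auto simp: tc)
  also have "\<dots> = finsum G (\<lambda>k. sm (of_nat (n choose k)) (t (Suc k) (n - k)) \<oplus> sm (of_nat (n choose k)) (t k (Suc n - k))) {..n}"
  proof (rule finsum_cong')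
    fix k assume k: "k \<in> {..n}"
    then have "Suc (n - k) = Suc n - k" by auto
    then show "Phi (?f k) = sm (of_nat (n choose k)) (t (Suc k) (n - k)) \<oplus> sm (of_nat (n choose k)) (t k (Suc n - k))"
      using Phi_sm tP tc sm_add_right by simp
  qed (auto simp: tc)
  also have "\<dots> = finsum G (\<lambda>k. sm (of_nat (n choose k)) (t (Suc k) (n - k))) {..n} \<oplus>
                 finsum G (\<lambda>k. sm (of_nat (n choose k)) (t k (Suc n - k))) {..n}"
    by (rule finsum_addf) (auto simp: tc)
  also have "\<dots> = finsum G (\<lambda>k. sm (of_nat (Suc n choose k)) (t k (Suc n - k))) {..Suc n}"
    by (rule finsum_binomial_Pascal[OF tc, symmetric])
  finally show ?case .
qed

lemma finsum_triangle:
  fixes t :: "nat \<Rightarrow> nat \<Rightarrow> 'a" and N :: nat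
  assumes tc: "\<And>a b. t a b \<in> carrier G"
  shows "finsum G (\<lambda>n. finsum G (\<lambda>k. t k (n - k)) {..n}) {..<N} = finsum G (\<lambda>(a, b). t a b) {(a, b). a + b < N}"
proof -
  have e: "{(a, b). a + b < N} = (\<Union>n\<in>{..<N}. (\<lambda>k. (k, n - k)) ` {..n})"
  proof (intro Set.set_eqI HOL.iffI)
    fix p assume "p \<in> {(a, b). a + b < N}"
    then obtain a b where p: "p = (a, b)" "a + b < N" by blast
    then show "p \<in> (\<Union>n\<in>{..<N}. (\<lambda>k. (k, n - k)) ` {..n})"
      by (auto intro!: bexI[of _ "a + b"] image_eqI[of _ _ a])
  qed auto
  have "finsum G (\<lambda>(a, b). t a b) (\<Union>n\<in>{..<N}. (\<lambda>k. (k, n - k)) ` {..n}) =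
        finsum G (\<lambda>n. finsum G (\<lambda>(a, b). t a b) ((\<lambda>k. (k, n - k)) ` {..n})) {..<N}"
    by (rule add.finprod_UN_disjoint) (auto simp: pairwise_def disjnt_def tc)
  also have "\<dots> = finsum G (\<lambda>n. finsum G (\<lambda>k. t k (n - k)) {..n}) {..<N}"
  proof (rule finsum_cong')
    fix n
    show "finsum G (\<lambda>(a, b). t a b) ((\<lambda>k. (k, n - k)) ` {..n}) = finsum G (\<lambda>k. t k (n - k)) {..n}"
      by (subst finsum_reindex) (auto simp: inj_on_def tc)
  qed (auto simp: tc finsum_closed Pi_def)
  finally show ?thesis using e by simp
qed

lemma finsum_square:
  fixes t :: "nat \<Rightarrow> nat \<Rightarrow> 'a" and N :: nat
  assumes tc: "\<And>a b. t a b \<in> carrier G"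
  shows "finsum G (\<lambda>a. finsum G (\<lambda>b. t a b) {..<N}) {..<N} = finsum G (\<lambda>(a, b). t a b) ({..<N} \<times> {..<N})"
proof -
  have e: "{..<N} \<times> {..<N} = (\<Union>a\<in>{..<N}. (\<lambda>b. (a, b)) ` {..<N})" by auto
  have "finsum G (\<lambda>(a, b). t a b) (\<Union>a\<in>{..<N}. (\<lambda>b. (a, b)) ` {..<N}) =
        finsum G (\<lambda>a. finsum G (\<lambda>(a, b). t a b) ((\<lambda>b. (a, b)) ` {..<N})) {..<N}"
    by (rule add.finprod_UN_disjoint) (auto simp: pairwise_def disjnt_def tc)
  also have "\<dots> = finsum G (\<lambda>a. finsum G (\<lambda>b. t a b) {..<N}) {..<N}"
  proof (rule finsum_cong')
    fix a
    show "finsum G (\<lambda>(a, b). t a b) ((\<lambda>b. (a, b)) ` {..<N}) = finsum G (\<lambda>b. t a b) {..<N}"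
      by (subst finsum_reindex) (auto simp: inj_on_def tc)
  qed (auto simp: tc finsum_closed Pi_def)
  finally show ?thesis using e by simp
qed

lemma finsum_square_minus_triangle:
  fixes t :: "nat \<Rightarrow> nat \<Rightarrow> 'a" and N :: nat
  assumes tc: "\<And>a b. t a b \<in> carrier G" and S: "submodule S"
    and tS: "\<And>a b. T \<le> a \<or> T \<le> b \<Longrightarrow> t a b \<in> S" and N: "2 * T \<le> N"
  shows "finsum G (\<lambda>a. finsum G (\<lambda>b. t a b) {..<N}) {..<N} \<ominus>
         finsum G (\<lambda>n. finsum G (\<lambda>k. t k (n - k)) {..n}) {..<N} \<in> S"
proof -
  note E1 = finsum_triangle[of t N, OF tc]
  note E2 = finsum_square[of t N, OF tc]
  have "finsum G (\<lambda>(a, b). t a b) ({..<N} \<times> {..<N}) \<ominus> finsum G (\<lambda>(a, b). t a b) {(a, b). a + b < N} \<in> S"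
  proof (rule finsum_diff_in_submodule[OF _ _ _ S])
    fix p assume p: "p \<in> {..<N} \<times> {..<N} - {(a, b). a + b < N}"
    then obtain a b where ab: "p = (a, b)" "\<not> a + b < N" by auto
    then have "T \<le> a \<or> T \<le> b" using N by linarith
    then show "(case p of (a, b) \<Rightarrow> t a b) \<in> S" using ab tS by simp
  qed (auto simp: tc)
  then show ?thesis by (simp only: E1 E2)
qed

text \<open>Substituting \<open>2 m\<close> for \<open>m\<close> and subtracting \<open>2\<^sup>N\<close> times the original sum kills
  the top coefficient.\<close>

lemma power_sums_eliminate_top:
  assumes S: "submodule S" and bc: "\<And>k. b k \<in> carrier G"
    and P: "\<And>m::nat. finsum G (\<lambda>k. sm ((of_nat m) ^ k) (b k)) {..<Suc N} \<in> S"
  shows "finsum G (\<lambda>k. sm ((of_nat m) ^ k) (sm ((2::'k) ^ k - 2 ^ N) (b k))) {..<N} \<in> S"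
proof -
  let ?c = "\<lambda>k. sm ((2::'k) ^ k - 2 ^ N) (b k)"
  have cc: "?c k \<in> carrier G" for k using bc by simp
  have P2: "finsum G (\<lambda>k. sm ((of_nat (2 * m)) ^ k) (b k)) {..<Suc N} \<in> S" using P .
  have P1: "sm (- (2 ^ N)) (finsum G (\<lambda>k. sm ((of_nat m) ^ k) (b k)) {..<Suc N}) \<in> S"
    using P submoduleD(4)[OF S] by blast
  have "finsum G (\<lambda>k. sm ((of_nat (2 * m)) ^ k) (b k)) {..<Suc N} \<oplus>
        sm (- (2 ^ N)) (finsum G (\<lambda>k. sm ((of_nat m) ^ k) (b k)) {..<Suc N})
      = finsum G (\<lambda>k. sm ((of_nat (2 * m)) ^ k + (- (2 ^ N)) * (of_nat m) ^ k) (b k)) {..<Suc N}"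
    by (simp add: sm_linear_combination sm_linear_combination_add bc)
  also have "\<dots> = sm ((of_nat (2 * m)) ^ N + (- (2 ^ N)) * (of_nat m) ^ N) (b N) \<oplus>
      finsum G (\<lambda>k. sm ((of_nat (2 * m)) ^ k + (- (2 ^ N)) * (of_nat m) ^ k) (b k)) {..<N}"
    unfolding lessThan_Suc by (subst finsum_insert) (auto simp: bc)
  also have "sm ((of_nat (2 * m)) ^ N + (- (2 ^ N)) * (of_nat m) ^ N) (b N) = \<zero>"
    using bc by (simp add: power_mult_distrib)
  also have "finsum G (\<lambda>k. sm ((of_nat (2 * m)) ^ k + (- (2 ^ N)) * (of_nat m) ^ k) (b k)) {..<N}
      = finsum G (\<lambda>k. sm ((of_nat m) ^ k) (?c k)) {..<N}"
  proof (rule finsum_cong')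
    fix k
    have "(of_nat (2 * m) :: 'k) ^ k + (- (2 ^ N)) * (of_nat m) ^ k = (of_nat m) ^ k * (2 ^ k - 2 ^ N)"
      by (simp add: power_mult_distrib algebra_simps)
    then show "sm ((of_nat (2 * m)) ^ k + (- (2 ^ N)) * (of_nat m) ^ k) (b k) = sm ((of_nat m) ^ k) (?c k)"
      using bc sm_mult by simp
  qed (auto simp: cc)
  finally have "finsum G (\<lambda>k. sm ((of_nat (2 * m)) ^ k) (b k)) {..<Suc N} \<oplus>
        sm (- (2 ^ N)) (finsum G (\<lambda>k. sm ((of_nat m) ^ k) (b k)) {..<Suc N})
      = finsum G (\<lambda>k. sm ((of_nat m) ^ k) (?c k)) {..<N}"
    using cc by (simp add: finsum_closed Pi_def)
  then show ?thesis using submoduleD(3)[OF S P2 P1] by simp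
qed

lemma coefficients_in_submodule:
  assumes KQ: "\<forall>n::nat. n > 0 \<longrightarrow> (\<exists>r::'k. of_nat n * r = 1)" and S: "submodule S"
  shows "(\<And>k. b k \<in> carrier G) \<Longrightarrow> (\<And>m::nat. finsum G (\<lambda>k. sm ((of_nat m) ^ k) (b k)) {..<N} \<in> S) \<Longrightarrow> k < N \<Longrightarrow> b k \<in> S"
proof (induction N arbitrary: b k)
  case 0 then show ?case by simp
next
  case (Suc N)
  note bc = Suc.prems(1)
  let ?c = "\<lambda>k. sm ((2::'k) ^ k - 2 ^ N) (b k)"
  have cc: "?c k \<in> carrier G" for k using bc by simp
  have Q: "finsum G (\<lambda>k. sm ((of_nat m) ^ k) (?c k)) {..<N} \<in> S" for m :: nat
    by (rule power_sums_eliminate_top[OF S bc Suc.prems(2)])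
  have cS: "?c k \<in> S" if "k < N" for k using Suc.IH[of ?c k, OF cc Q that] .
  have bS: "b k \<in> S" if "k < N" for k
  proof -
    have "2 ^ N - 2 ^ k > (0::nat)" using that by (simp add: power_strict_increasing)
    then obtain r :: 'k where "of_nat (2 ^ N - 2 ^ k) * r = 1" using KQ by blast
    then have "(2 ^ k - 2 ^ N) * - r = 1"
      using that by (simp add: of_nat_diff power_increasing algebra_simps)
    then show ?thesis by (rule submodule_sm_cancel[OF S bc _ cS[OF that]])
  qed
  show ?case
  proof (cases "k < N")
    case True then show ?thesis using bS by simp
  next
    case False
    then have kN: "k = N" using Suc.prems(3) by simp
    have "finsum G (\<lambda>k. sm ((of_nat (1::nat)) ^ k) (b k)) {..<Suc N} \<in> S" using Suc.prems(2) .
    then have P: "b N \<oplus> finsum G b {..<N} \<in> S"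
      unfolding lessThan_Suc using bc by (simp add: finsum_insert Pi_def)
    have "finsum G b {..<N} \<in> S" by (rule submodule_finsum[OF S]) (auto intro: bS)
    then have "(b N \<oplus> finsum G b {..<N}) \<ominus> finsum G b {..<N} \<in> S"
      using submodule_minus[OF S P] by simp
    moreover have "(b N \<oplus> finsum G b {..<N}) \<ominus> finsum G b {..<N} = b N"
      using bc by (simp add: a_minus_def a_assoc r_neg finsum_closed Pi_def)
    ultimately show ?thesis using kN by simp
  qed
qed

end

definition hom_group :: "('o, 'k::comm_ring_1, 'm) sac \<Rightarrow> 'o \<Rightarrow> 'o \<Rightarrow> 'm ring" where
  "hom_group R p0 p1 = \<lparr>carrier = Hom R p0 p1, mult = (\<lambda>x y. x), one = zer R p0 p1,
      ring.zero = zer R p0 p1, ring.add = sac.add R p0 p1\<rparr>"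

lemma hom_group_simps [simp]:
  "carrier (hom_group R p0 p1) = Hom R p0 p1"
  "ring.zero (hom_group R p0 p1) = zer R p0 p1"
  "ring.add (hom_group R p0 p1) = sac.add R p0 p1"
  by (simp_all add: hom_group_def)

lemma kmodule_onD: assumes "kmodule_on M ad z sm"
  shows "z \<in> M" "\<And>x y. x \<in> M \<Longrightarrow> y \<in> M \<Longrightarrow> ad x y \<in> M" "\<And>a x. x \<in> M \<Longrightarrow> sm a x \<in> M"
    "\<And>x y w. x \<in> M \<Longrightarrow> y \<in> M \<Longrightarrow> w \<in> M \<Longrightarrow> ad (ad x y) w = ad x (ad y w)"
    "\<And>x. x \<in> M \<Longrightarrow> ad z x = x"
    "\<And>a x y. x \<in> M \<Longrightarrow> y \<in> M \<Longrightarrow> sm a (ad x y) = ad (sm a x) (sm a y)"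
    "\<And>a b x. x \<in> M \<Longrightarrow> sm (a + b) x = ad (sm a x) (sm b x)"
    "\<And>a b x. x \<in> M \<Longrightarrow> sm (a * b) x = sm a (sm b x)"
    "\<And>x. x \<in> M \<Longrightarrow> sm 1 x = x"
    "\<And>x y. x \<in> M \<Longrightarrow> y \<in> M \<Longrightarrow> ad x y = ad y x"
    "\<And>x. x \<in> M \<Longrightarrow> \<exists>y\<in>M. ad x y = z"
  \<comment> \<open>\<open>blast\<close> would substitute the free variable \<open>z\<close> away using the inverse axiom\<close>
  by (insert assms, unfold kmodule_on_def, meson+)

lemma kmodule_on_imp_kmodule:
  assumes "kmodule_on M ad z sm"
  shows "kmodule \<lparr>carrier = M, mult = (\<lambda>x y. x), one = z, ring.zero = z, ring.add = ad\<rparr> sm"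
proof (intro kmodule.intro abelian_groupI kmodule_axioms.intro)
  show "\<And>x. x \<in> carrier \<lparr>carrier = M, mult = (\<lambda>x y. x), one = z, ring.zero = z, ring.add = ad\<rparr>
    \<Longrightarrow> \<exists>y\<in>carrier \<lparr>carrier = M, mult = (\<lambda>x y. x), one = z, ring.zero = z, ring.add = ad\<rparr>.
      y \<oplus>\<^bsub>\<lparr>carrier = M, mult = (\<lambda>x y. x), one = z, ring.zero = z, ring.add = ad\<rparr>\<^esub> x
        = \<zero>\<^bsub>\<lparr>carrier = M, mult = (\<lambda>x y. x), one = z, ring.zero = z, ring.add = ad\<rparr>\<^esub>"
    using kmodule_onD(10,11)[OF assms] by fastforce
qed (simp_all add: kmodule_onD(1-9)[OF assms], metis kmodule_onD(10)[OF assms])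

locale filtered_KSAC =
  fixes R :: "('o, 'k::comm_ring_1, 'm) sac"
  assumes ksac: "is_KSAC R" and filt: "is_filtered R"
begin

lemma hom_kmodule_on:
  "p0 \<in> Ob R \<Longrightarrow> p1 \<in> Ob R \<Longrightarrow> kmodule_on (Hom R p0 p1) (sac.add R p0 p1) (zer R p0 p1) (smult R p0 p1)"
  using ksac unfolding is_KSAC_def by meson

lemma kmodule_hom_group: "p0 \<in> Ob R \<Longrightarrow> p1 \<in> Ob R \<Longrightarrow> kmodule (hom_group R p0 p1) (smult R p0 p1)"
  unfolding hom_group_def by (rule kmodule_on_imp_kmodule[OF hom_kmodule_on])

lemma mul_closed [simp]:
  "p0 \<in> Ob R \<Longrightarrow> p1 \<in> Ob R \<Longrightarrow> p2 \<in> Ob R \<Longrightarrow> u \<in> Hom R p0 p1 \<Longrightarrow> v \<in> Hom R p1 p2 \<Longrightarrow>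
   mul R p0 p1 p2 u v \<in> Hom R p0 p2"
  using ksac unfolding is_KSAC_def by meson

lemma mul_assoc:
  "p0 \<in> Ob R \<Longrightarrow> p1 \<in> Ob R \<Longrightarrow> p2 \<in> Ob R \<Longrightarrow> p3 \<in> Ob R \<Longrightarrow>
   u \<in> Hom R p0 p1 \<Longrightarrow> v \<in> Hom R p1 p2 \<Longrightarrow> w \<in> Hom R p2 p3 \<Longrightarrow>
   mul R p0 p2 p3 (mul R p0 p1 p2 u v) w = mul R p0 p1 p3 u (mul R p1 p2 p3 v w)"
  using ksac unfolding is_KSAC_def by meson

lemma mul_add_left:
  "p0 \<in> Ob R \<Longrightarrow> p1 \<in> Ob R \<Longrightarrow> p2 \<in> Ob R \<Longrightarrow> u \<in> Hom R p0 p1 \<Longrightarrow> u' \<in> Hom R p0 p1 \<Longrightarrow>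
   v \<in> Hom R p1 p2 \<Longrightarrow>
   mul R p0 p1 p2 (sac.add R p0 p1 u u') v = sac.add R p0 p2 (mul R p0 p1 p2 u v) (mul R p0 p1 p2 u' v)"
  using ksac unfolding is_KSAC_def by meson

lemma mul_add_right:
  "p0 \<in> Ob R \<Longrightarrow> p1 \<in> Ob R \<Longrightarrow> p2 \<in> Ob R \<Longrightarrow> u \<in> Hom R p0 p1 \<Longrightarrow> v \<in> Hom R p1 p2 \<Longrightarrow>
   v' \<in> Hom R p1 p2 \<Longrightarrow>
   mul R p0 p1 p2 u (sac.add R p1 p2 v v') = sac.add R p0 p2 (mul R p0 p1 p2 u v) (mul R p0 p1 p2 u v')"
  using ksac unfolding is_KSAC_def by meson

lemma mul_sm_left:
  "p0 \<in> Ob R \<Longrightarrow> p1 \<in> Ob R \<Longrightarrow> p2 \<in> Ob R \<Longrightarrow> u \<in> Hom R p0 p1 \<Longrightarrow> v \<in> Hom R p1 p2 \<Longrightarrow>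
   mul R p0 p1 p2 (smult R p0 p1 a u) v = smult R p0 p2 a (mul R p0 p1 p2 u v)"
  using ksac unfolding is_KSAC_def by meson

lemma mul_sm_right:
  "p0 \<in> Ob R \<Longrightarrow> p1 \<in> Ob R \<Longrightarrow> p2 \<in> Ob R \<Longrightarrow> u \<in> Hom R p0 p1 \<Longrightarrow> v \<in> Hom R p1 p2 \<Longrightarrow>
   mul R p0 p1 p2 u (smult R p1 p2 a v) = smult R p0 p2 a (mul R p0 p1 p2 u v)"
  using ksac unfolding is_KSAC_def by meson

lemma idm_closed [simp]: "p \<in> Ob R \<Longrightarrow> idm R p \<in> Hom R p p"
  using ksac unfolding is_KSAC_def by meson

lemma mul_idm:
  "p0 \<in> Ob R \<Longrightarrow> p1 \<in> Ob R \<Longrightarrow> u \<in> Hom R p0 p1 \<Longrightarrow>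
   mul R p0 p0 p1 (idm R p0) u = u \<and> mul R p0 p1 p1 u (idm R p1) = u"
  using ksac unfolding is_KSAC_def by meson

lemma Hom_trivial_or_iso:
  "p0 \<in> Ob R \<Longrightarrow> p1 \<in> Ob R \<Longrightarrow> Hom R p0 p1 = {zer R p0 p1} \<or>
   (\<exists>u v. u \<in> Hom R p0 p1 \<and> v \<in> Hom R p1 p0 \<and> mul R p0 p1 p0 u v = idm R p0 \<and> mul R p1 p0 p1 v u = idm R p1)"
  using ksac unfolding is_KSAC_def by meson

lemma iso_factor:
  assumes o: "p0 \<in> Ob R" "p1 \<in> Ob R" and uv: "u \<in> Hom R p0 p1" "v \<in> Hom R p1 p0" "mul R p0 p1 p0 u v = idm R p0"
    and x: "x \<in> Hom R p0 p1"
  shows "x = mul R p0 p1 p1 u (mul R p1 p0 p1 v x)"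
proof -
  have "x = mul R p0 p0 p1 (idm R p0) x" using mul_idm[OF o x] by simp
  also have "\<dots> = mul R p0 p0 p1 (mul R p0 p1 p0 u v) x" using uv by simp
  also have "\<dots> = mul R p0 p1 p1 u (mul R p1 p0 p1 v x)"
    using mul_assoc[OF o(1) o(2) o(1) o(2) uv(1,2) x] .
  finally show ?thesis .
qed

lemma hom_add [simp]:
  "p0 \<in> Ob R \<Longrightarrow> p1 \<in> Ob R \<Longrightarrow> x \<in> Hom R p0 p1 \<Longrightarrow> y \<in> Hom R p0 p1 \<Longrightarrow> sac.add R p0 p1 x y \<in> Hom R p0 p1"
  using kmodule_onD(2)[OF hom_kmodule_on] .

lemma hom_zer [simp]: "p0 \<in> Ob R \<Longrightarrow> p1 \<in> Ob R \<Longrightarrow> zer R p0 p1 \<in> Hom R p0 p1"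
  using kmodule_onD(1)[OF hom_kmodule_on] .

lemma hom_sm [simp]: "p0 \<in> Ob R \<Longrightarrow> p1 \<in> Ob R \<Longrightarrow> x \<in> Hom R p0 p1 \<Longrightarrow> smult R p0 p1 a x \<in> Hom R p0 p1"
  using kmodule_onD(3)[OF hom_kmodule_on] .

lemma hom_sm_add_right:
  "p0 \<in> Ob R \<Longrightarrow> p1 \<in> Ob R \<Longrightarrow> x \<in> Hom R p0 p1 \<Longrightarrow> y \<in> Hom R p0 p1 \<Longrightarrow>
   smult R p0 p1 a (sac.add R p0 p1 x y) = sac.add R p0 p1 (smult R p0 p1 a x) (smult R p0 p1 a y)"
  using kmodule_onD(6)[OF hom_kmodule_on] .

lemma hom_sm_add_left:
  "p0 \<in> Ob R \<Longrightarrow> p1 \<in> Ob R \<Longrightarrow> x \<in> Hom R p0 p1 \<Longrightarrow>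
   smult R p0 p1 (a + b) x = sac.add R p0 p1 (smult R p0 p1 a x) (smult R p0 p1 b x)"
  using kmodule_onD(7)[OF hom_kmodule_on] .

lemma hom_sm_mult:
  "p0 \<in> Ob R \<Longrightarrow> p1 \<in> Ob R \<Longrightarrow> x \<in> Hom R p0 p1 \<Longrightarrow>
   smult R p0 p1 (a * b) x = smult R p0 p1 a (smult R p0 p1 b x)"
  using kmodule_onD(8)[OF hom_kmodule_on] .

lemma hom_sm_one: "p0 \<in> Ob R \<Longrightarrow> p1 \<in> Ob R \<Longrightarrow> x \<in> Hom R p0 p1 \<Longrightarrow> smult R p0 p1 1 x = x"
  using kmodule_onD(9)[OF hom_kmodule_on] .

lemma hom_add_commute:
  "p0 \<in> Ob R \<Longrightarrow> p1 \<in> Ob R \<Longrightarrow> x \<in> Hom R p0 p1 \<Longrightarrow> y \<in> Hom R p0 p1 \<Longrightarrow>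
   sac.add R p0 p1 x y = sac.add R p0 p1 y x"
  using kmodule_onD(10)[OF hom_kmodule_on] .

lemma hom_add_assoc:
  "p0 \<in> Ob R \<Longrightarrow> p1 \<in> Ob R \<Longrightarrow> x \<in> Hom R p0 p1 \<Longrightarrow> y \<in> Hom R p0 p1 \<Longrightarrow> z \<in> Hom R p0 p1 \<Longrightarrow>
   sac.add R p0 p1 (sac.add R p0 p1 x y) z = sac.add R p0 p1 x (sac.add R p0 p1 y z)"
  using kmodule_onD(4)[OF hom_kmodule_on] .

lemma hom_zer_add: "p0 \<in> Ob R \<Longrightarrow> p1 \<in> Ob R \<Longrightarrow> x \<in> Hom R p0 p1 \<Longrightarrow> sac.add R p0 p1 (zer R p0 p1) x = x"
  using kmodule_onD(5)[OF hom_kmodule_on] .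

lemma hom_add_zer: "p0 \<in> Ob R \<Longrightarrow> p1 \<in> Ob R \<Longrightarrow> x \<in> Hom R p0 p1 \<Longrightarrow> sac.add R p0 p1 x (zer R p0 p1) = x"
  using hom_add_commute hom_zer_add by simp

lemma hom_sm_zero: "p0 \<in> Ob R \<Longrightarrow> p1 \<in> Ob R \<Longrightarrow> x \<in> Hom R p0 p1 \<Longrightarrow> smult R p0 p1 0 x = zer R p0 p1"
  using kmodule.sm_zero_left[OF kmodule_hom_group] by simp

lemma hom_sm_zer: "p0 \<in> Ob R \<Longrightarrow> p1 \<in> Ob R \<Longrightarrow> smult R p0 p1 a (zer R p0 p1) = zer R p0 p1"
  using kmodule.sm_zero_right[OF kmodule_hom_group] by simp

lemma hom_sm_commute: "p0 \<in> Ob R \<Longrightarrow> p1 \<in> Ob R \<Longrightarrow> x \<in> Hom R p0 p1 \<Longrightarrow>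
   smult R p0 p1 a (smult R p0 p1 b x) = smult R p0 p1 b (smult R p0 p1 a x)"
  using hom_sm_mult[of p0 p1 x a b] hom_sm_mult[of p0 p1 x b a] by (simp add: mult.commute)

lemma hom_add_add_swap:
  assumes o: "p0 \<in> Ob R" "p1 \<in> Ob R" and h: "a \<in> Hom R p0 p1" "b \<in> Hom R p0 p1" "c \<in> Hom R p0 p1" "d \<in> Hom R p0 p1"
  shows "sac.add R p0 p1 (sac.add R p0 p1 a b) (sac.add R p0 p1 c d) = sac.add R p0 p1 (sac.add R p0 p1 a c) (sac.add R p0 p1 b d)"
proof -
  note A = hom_add_assoc[OF o] and C = hom_add_commute[OF o]
  have "sac.add R p0 p1 (sac.add R p0 p1 a b) (sac.add R p0 p1 c d) = sac.add R p0 p1 a (sac.add R p0 p1 b (sac.add R p0 p1 c d))"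
    using A h o by simp
  also have "\<dots> = sac.add R p0 p1 a (sac.add R p0 p1 (sac.add R p0 p1 b c) d)" using A h o by simp
  also have "\<dots> = sac.add R p0 p1 a (sac.add R p0 p1 (sac.add R p0 p1 c b) d)"
    using C[of b c] h o by simp
  also have "\<dots> = sac.add R p0 p1 a (sac.add R p0 p1 c (sac.add R p0 p1 b d))" using A h o by simp
  also have "\<dots> = sac.add R p0 p1 (sac.add R p0 p1 a c) (sac.add R p0 p1 b d)" using A h o by simp
  finally show ?thesis .
qed

lemma hsub_eq_minus: "p0 \<in> Ob R \<Longrightarrow> p1 \<in> Ob R \<Longrightarrow> y \<in> Hom R p0 p1 \<Longrightarrow>
    hsub R p0 p1 x y = x \<ominus>\<^bsub>hom_group R p0 p1\<^esub> y"
  using kmodule.sm_minus_one[OF kmodule_hom_group] by (simp add: hsub_def a_minus_def)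

lemma hom_hsub[simp]: "p0 \<in> Ob R \<Longrightarrow> p1 \<in> Ob R \<Longrightarrow> x \<in> Hom R p0 p1 \<Longrightarrow> y \<in> Hom R p0 p1 \<Longrightarrow> hsub R p0 p1 x y \<in> Hom R p0 p1"
  by (simp add: hsub_def)

lemma hsub_eq_zer_imp_eq: "p0 \<in> Ob R \<Longrightarrow> p1 \<in> Ob R \<Longrightarrow> x \<in> Hom R p0 p1 \<Longrightarrow> y \<in> Hom R p0 p1 \<Longrightarrow>
  hsub R p0 p1 x y = zer R p0 p1 \<Longrightarrow> x = y"
  using kmodule.minus_eq_zero_imp_eq[OF kmodule_hom_group] hsub_eq_minus by simp

lemma mul_zer:
  assumes "p0 \<in> Ob R" "p1 \<in> Ob R" "p2 \<in> Ob R" "u \<in> Hom R p0 p1" "v \<in> Hom R p1 p2"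
  shows "mul R p0 p1 p2 (zer R p0 p1) v = zer R p0 p2" "mul R p0 p1 p2 u (zer R p1 p2) = zer R p0 p2"
proof -
  interpret M1: kmodule "hom_group R p0 p1" "smult R p0 p1" using kmodule_hom_group[OF assms(1,2)] .
  interpret M2: kmodule "hom_group R p1 p2" "smult R p1 p2" using kmodule_hom_group[OF assms(2,3)] .
  interpret M3: kmodule "hom_group R p0 p2" "smult R p0 p2" using kmodule_hom_group[OF assms(1,3)] .
  have "mul R p0 p1 p2 (zer R p0 p1) v = mul R p0 p1 p2 (smult R p0 p1 0 (zer R p0 p1)) v"
    using M1.sm_zero_left[of "zer R p0 p1"] assms by simp
  also have "\<dots> = zer R p0 p2" using assms mul_sm_left[of p0 p1 p2 "zer R p0 p1" v 0] M3.sm_zero_left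
    by simp
  finally show "mul R p0 p1 p2 (zer R p0 p1) v = zer R p0 p2" .
  have "mul R p0 p1 p2 u (zer R p1 p2) = mul R p0 p1 p2 u (smult R p1 p2 0 (zer R p1 p2))"
    using M2.sm_zero_left[of "zer R p1 p2"] assms by simp
  also have "\<dots> = zer R p0 p2" using assms mul_sm_right[of p0 p1 p2 u "zer R p1 p2" 0] M3.sm_zero_left
    by simp
  finally show "mul R p0 p1 p2 u (zer R p1 p2) = zer R p0 p2" .
qed

lemma mul_hsub:
  assumes "p0 \<in> Ob R" "p1 \<in> Ob R" "p2 \<in> Ob R" "u \<in> Hom R p0 p1" "u' \<in> Hom R p0 p1"
     "v \<in> Hom R p1 p2" "v' \<in> Hom R p1 p2"
  shows "mul R p0 p1 p2 (hsub R p0 p1 u u') v = hsub R p0 p2 (mul R p0 p1 p2 u v) (mul R p0 p1 p2 u' v)"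
    "mul R p0 p1 p2 u (hsub R p1 p2 v v') = hsub R p0 p2 (mul R p0 p1 p2 u v) (mul R p0 p1 p2 u v')"
  using assms by (simp_all add: hsub_def mul_add_left mul_add_right mul_sm_left mul_sm_right)

lemma finsum_Hom:
  assumes o: "p0 \<in> Ob R" "p1 \<in> Ob R"
  shows "(\<And>x. x \<in> A \<Longrightarrow> f x \<in> Hom R p0 p1) \<Longrightarrow> finsum (hom_group R p0 p1) f A \<in> Hom R p0 p1"
proof -
  interpret M: kmodule "hom_group R p0 p1" "smult R p0 p1" by (rule kmodule_hom_group[OF o])
  assume h: "\<And>x. x \<in> A \<Longrightarrow> f x \<in> Hom R p0 p1"
  show "finsum (hom_group R p0 p1) f A \<in> Hom R p0 p1"
    using M.finsum_closed[of f A] h unfolding Pi_def by auto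
qed

lemma mul_finsum_left:
  assumes o: "p0 \<in> Ob R" "p1 \<in> Ob R" "p2 \<in> Ob R" and v: "v \<in> Hom R p1 p2" and f: "\<And>i. f i \<in> Hom R p0 p1"
    and fin: "finite A"
  shows "mul R p0 p1 p2 (finsum (hom_group R p0 p1) f A) v = finsum (hom_group R p0 p2) (\<lambda>i. mul R p0 p1 p2 (f i) v) A"
proof -
  interpret M1: kmodule "hom_group R p0 p1" "smult R p0 p1" by (rule kmodule_hom_group[OF o(1,2)])
  interpret M2: kmodule "hom_group R p0 p2" "smult R p0 p2" by (rule kmodule_hom_group[OF o(1,3)])
  show ?thesis
    by (rule additive_finsum[OF M1.abelian_group_axioms M2.abelian_group_axioms])
       (use o v f fin mul_add_left mul_zer(1)[OF o hom_zer[OF o(1,2)] v] in auto)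
qed

lemma mul_finsum_right:
  assumes o: "p0 \<in> Ob R" "p1 \<in> Ob R" "p2 \<in> Ob R" and u: "u \<in> Hom R p0 p1" and f: "\<And>i. f i \<in> Hom R p1 p2"
    and fin: "finite A"
  shows "mul R p0 p1 p2 u (finsum (hom_group R p1 p2) f A) = finsum (hom_group R p0 p2) (\<lambda>i. mul R p0 p1 p2 u (f i)) A"
proof -
  interpret M1: kmodule "hom_group R p1 p2" "smult R p1 p2" by (rule kmodule_hom_group[OF o(2,3)])
  interpret M2: kmodule "hom_group R p0 p2" "smult R p0 p2" by (rule kmodule_hom_group[OF o(1,3)])
  show ?thesis
    by (rule additive_finsum[OF M1.abelian_group_axioms M2.abelian_group_axioms])
       (use o u f fin mul_add_right mul_zer(2)[OF o u hom_zer[OF o(2,3)]] in auto)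
qed

lemma Fil_0: "p0 \<in> Ob R \<Longrightarrow> p1 \<in> Ob R \<Longrightarrow> Fil R 0 p0 p1 = Hom R p0 p1"
  using filt unfolding is_filtered_def by meson

lemma Fil_Suc: "p0 \<in> Ob R \<Longrightarrow> p1 \<in> Ob R \<Longrightarrow> Fil R (Suc n) p0 p1 \<subseteq> Fil R n p0 p1"
  using filt unfolding is_filtered_def by meson

lemma Fil_mul:
  "p0 \<in> Ob R \<Longrightarrow> p1 \<in> Ob R \<Longrightarrow> p2 \<in> Ob R \<Longrightarrow> u \<in> Fil R n1 p0 p1 \<Longrightarrow> v \<in> Fil R n2 p1 p2 \<Longrightarrow>
   mul R p0 p1 p2 u v \<in> Fil R (n1 + n2) p0 p2"
  using filt unfolding is_filtered_def by meson

lemma Fil_submodule: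
  assumes o: "p0 \<in> Ob R" "p1 \<in> Ob R"
  shows "kmodule.submodule (hom_group R p0 p1) (smult R p0 p1) (Fil R n p0 p1)"
proof -
  have "submodule_on (Hom R p0 p1) (sac.add R p0 p1) (zer R p0 p1) (smult R p0 p1) (Fil R n p0 p1)"
    using filt o unfolding is_filtered_def by meson
  then show ?thesis
    unfolding submodule_on_def kmodule.submodule_def[OF kmodule_hom_group[OF o]] by simp
qed

lemma Fil_antimono:
  assumes "p0 \<in> Ob R" "p1 \<in> Ob R" "n \<le> m"
  shows "Fil R m p0 p1 \<subseteq> Fil R n p0 p1"
  using assms(3)
proof (induction m rule: dec_induct)
  case base then show ?case by simp
next
  case (step m) then show ?case using Fil_Suc[OF assms(1,2), of m] by (meson order_trans)
qed

lemma Fil_in_Hom: "p0 \<in> Ob R \<Longrightarrow> p1 \<in> Ob R \<Longrightarrow> x \<in> Fil R n p0 p1 \<Longrightarrow> x \<in> Hom R p0 p1"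
  using Fil_antimono[of p0 p1 0 n] Fil_0 by auto

lemma Fil_zer[simp]: assumes o: "p0 \<in> Ob R" "p1 \<in> Ob R" shows "zer R p0 p1 \<in> Fil R n p0 p1"
  using kmodule.submoduleD(2)[OF kmodule_hom_group[OF o] Fil_submodule[OF o]] by simp

lemma Fil_add[simp]:
  assumes o: "p0 \<in> Ob R" "p1 \<in> Ob R"
  shows "x \<in> Fil R n p0 p1 \<Longrightarrow> y \<in> Fil R n p0 p1 \<Longrightarrow> sac.add R p0 p1 x y \<in> Fil R n p0 p1"
  using kmodule.submoduleD(3)[OF kmodule_hom_group[OF o] Fil_submodule[OF o]] by simp

lemma Fil_sm[simp]:
  assumes o: "p0 \<in> Ob R" "p1 \<in> Ob R"
  shows "x \<in> Fil R n p0 p1 \<Longrightarrow> smult R p0 p1 a x \<in> Fil R n p0 p1"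
  using kmodule.submoduleD(4)[OF kmodule_hom_group[OF o] Fil_submodule[OF o]] by simp

lemma fil_cong_refl:
  assumes o: "p0 \<in> Ob R" "p1 \<in> Ob R" and x: "x \<in> Hom R p0 p1"
  shows "hsub R p0 p1 x x \<in> Fil R n p0 p1"
  unfolding hsub_eq_minus[OF o x]
    by (rule kmodule.submodule_cong_refl[OF kmodule_hom_group[OF o] Fil_submodule[OF o]]) (use x in simp)

lemma fil_cong_sym:
  assumes o: "p0 \<in> Ob R" "p1 \<in> Ob R" and h: "x \<in> Hom R p0 p1" "y \<in> Hom R p0 p1"
  "hsub R p0 p1 x y \<in> Fil R n p0 p1" shows "hsub R p0 p1 y x \<in> Fil R n p0 p1"
  unfolding hsub_eq_minus[OF o h(1)]
    by (rule kmodule.submodule_cong_sym[OF kmodule_hom_group[OF o] Fil_submodule[OF o]]) (use h hsub_eq_minus[OF o h(2)] in simp_all)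

lemma fil_cong_trans:
  assumes o: "p0 \<in> Ob R" "p1 \<in> Ob R" and h: "x \<in> Hom R p0 p1" "y \<in> Hom R p0 p1" "z \<in> Hom R p0 p1"
  "hsub R p0 p1 x y \<in> Fil R n p0 p1" "hsub R p0 p1 y z \<in> Fil R n p0 p1" shows "hsub R p0 p1 x z \<in> Fil R n p0 p1"
  unfolding hsub_eq_minus[OF o h(3)]
    by (rule kmodule.submodule_cong_trans[OF kmodule_hom_group[OF o] Fil_submodule[OF o], of x y])
    (use h hsub_eq_minus[OF o h(2)] hsub_eq_minus[OF o h(3)] in simp_all)

lemma fil_cong_add:
  assumes o: "p0 \<in> Ob R" "p1 \<in> Ob R" and h: "x \<in> Hom R p0 p1" "y \<in> Hom R p0 p1" "x' \<in> Hom R p0 p1" "y' \<in> Hom R p0 p1"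
  "hsub R p0 p1 x x' \<in> Fil R n p0 p1" "hsub R p0 p1 y y' \<in> Fil R n p0 p1" shows
  "hsub R p0 p1 (sac.add R p0 p1 x y) (sac.add R p0 p1 x' y') \<in> Fil R n p0 p1"
proof -
  have yy: "sac.add R p0 p1 x' y' \<in> Hom R p0 p1" using o h by simp
  show ?thesis
  unfolding hsub_eq_minus[OF o yy]
    using kmodule.submodule_cong_add[OF kmodule_hom_group[OF o] Fil_submodule[OF o], of x y x' y'] h
    hsub_eq_minus[OF o h(3)] hsub_eq_minus[OF o h(4)] by simp
qed

lemma fil_cong_sm:
  assumes o: "p0 \<in> Ob R" "p1 \<in> Ob R" and h: "x \<in> Hom R p0 p1" "y \<in> Hom R p0 p1"
  "hsub R p0 p1 x y \<in> Fil R n p0 p1" shows "hsub R p0 p1 (smult R p0 p1 a x) (smult R p0 p1 a y) \<in> Fil R n p0 p1"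
proof -
  have yy: "smult R p0 p1 a y \<in> Hom R p0 p1" using o h by simp
  show ?thesis
  unfolding hsub_eq_minus[OF o yy]
    using kmodule.submodule_cong_sm[OF kmodule_hom_group[OF o] Fil_submodule[OF o], of x y] h
    hsub_eq_minus[OF o h(2)] by simp
qed

lemma fil_cong_add_member:
  assumes o: "p0 \<in> Ob R" "p1 \<in> Ob R" and h: "x \<in> Hom R p0 p1" "y \<in> Hom R p0 p1" "t \<in> Hom R p0 p1"
  "hsub R p0 p1 x y \<in> Fil R n p0 p1" "t \<in> Fil R n p0 p1" shows
  "hsub R p0 p1 (sac.add R p0 p1 x t) y \<in> Fil R n p0 p1"
  unfolding hsub_eq_minus[OF o h(2)]
    using kmodule.submodule_cong_add_small[OF kmodule_hom_group[OF o] Fil_submodule[OF o], of x y t] h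
    hsub_eq_minus[OF o h(2)] by simp

lemma fil_cong_mul:
  assumes o: "p0 \<in> Ob R" "p1 \<in> Ob R" "p2 \<in> Ob R" and h: "u \<in> Hom R p0 p1" "u' \<in> Hom R p0 p1"
     "v \<in> Hom R p1 p2" "v' \<in> Hom R p1 p2"
     and c: "hsub R p0 p1 u u' \<in> Fil R n p0 p1" "hsub R p1 p2 v v' \<in> Fil R n p1 p2"
  shows "hsub R p0 p2 (mul R p0 p1 p2 u v) (mul R p0 p1 p2 u' v') \<in> Fil R n p0 p2"
proof (rule fil_cong_trans[where y = "mul R p0 p1 p2 u' v"])
  have "hsub R p0 p2 (mul R p0 p1 p2 u v) (mul R p0 p1 p2 u' v) = mul R p0 p1 p2 (hsub R p0 p1 u u') v"
    using mul_hsub o h by simp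
  moreover have "\<dots> \<in> Fil R (n + 0) p0 p2"
    using Fil_mul[OF o c(1), of v 0] Fil_0[OF o(2,3)] h by simp
  ultimately show "hsub R p0 p2 (mul R p0 p1 p2 u v) (mul R p0 p1 p2 u' v) \<in> Fil R n p0 p2" by simp
  have "hsub R p0 p2 (mul R p0 p1 p2 u' v) (mul R p0 p1 p2 u' v') = mul R p0 p1 p2 u' (hsub R p1 p2 v v')"
    using mul_hsub o h by simp
  moreover have "\<dots> \<in> Fil R (0 + n) p0 p2"
    using Fil_mul[OF o _ c(2), of u' 0] Fil_0[OF o(1,2)] h by simp
  ultimately show "hsub R p0 p2 (mul R p0 p1 p2 u' v) (mul R p0 p1 p2 u' v') \<in> Fil R n p0 p2" by simp
qed (use o h in auto)

lemma fil_cong_mul_left: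
  assumes o: "p0 \<in> Ob R" "p1 \<in> Ob R" "p2 \<in> Ob R" and w: "w \<in> Hom R p0 p1"
    and xy: "x \<in> Hom R p1 p2" "y \<in> Hom R p1 p2" and c: "hsub R p1 p2 x y \<in> Fil R n p1 p2"
  shows "hsub R p0 p2 (mul R p0 p1 p2 w x) (mul R p0 p1 p2 w y) \<in> Fil R n p0 p2"
  by (rule fil_cong_mul[OF o w w xy fil_cong_refl[OF o(1,2) w] c])

lemma klinearD:
  assumes "is_klinear_fam R D" "p0 \<in> Ob R" "p1 \<in> Ob R"
  shows "u \<in> Hom R p0 p1 \<Longrightarrow> D p0 p1 u \<in> Hom R p0 p1"
    "u \<in> Hom R p0 p1 \<Longrightarrow> v \<in> Hom R p0 p1 \<Longrightarrow> D p0 p1 (sac.add R p0 p1 u v) = sac.add R p0 p1 (D p0 p1 u) (D p0 p1 v)"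
    "u \<in> Hom R p0 p1 \<Longrightarrow> D p0 p1 (smult R p0 p1 a u) = smult R p0 p1 a (D p0 p1 u)"
  using assms unfolding is_klinear_fam_def by simp_all

lemma klinear_zer:
  assumes "is_klinear_fam R D" "p0 \<in> Ob R" "p1 \<in> Ob R"
  shows "D p0 p1 (zer R p0 p1) = zer R p0 p1"
proof -
  have "D p0 p1 (zer R p0 p1) = D p0 p1 (smult R p0 p1 0 (zer R p0 p1))" using hom_sm_zero assms by simp
  also have "\<dots> = smult R p0 p1 0 (D p0 p1 (zer R p0 p1))"
    using klinearD(3)[OF assms, of "zer R p0 p1" 0] assms by simp
  also have "\<dots> = zer R p0 p1" using klinearD(1)[OF assms, of "zer R p0 p1"] hom_sm_zero assms by simp
  finally show ?thesis .
qed

lemma funpow_Hom: "is_klinear_fam R D \<Longrightarrow> p0 \<in> Ob R \<Longrightarrow> p1 \<in> Ob R \<Longrightarrow> u \<in> Hom R p0 p1 \<Longrightarrow> (D p0 p1 ^^ k) u \<in> Hom R p0 p1"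
  by (induction k) (simp_all add: klinearD)

lemma klinear_funpow_add: "is_klinear_fam R D \<Longrightarrow> p0 \<in> Ob R \<Longrightarrow> p1 \<in> Ob R \<Longrightarrow> u \<in> Hom R p0 p1 \<Longrightarrow> v \<in> Hom R p0 p1 \<Longrightarrow>
  (D p0 p1 ^^ k) (sac.add R p0 p1 u v) = sac.add R p0 p1 ((D p0 p1 ^^ k) u) ((D p0 p1 ^^ k) v)"
  by (induction k) (simp_all add: klinearD funpow_Hom)

lemma klinear_funpow_sm: "is_klinear_fam R D \<Longrightarrow> p0 \<in> Ob R \<Longrightarrow> p1 \<in> Ob R \<Longrightarrow> u \<in> Hom R p0 p1 \<Longrightarrow>
  (D p0 p1 ^^ k) (smult R p0 p1 a u) = smult R p0 p1 a ((D p0 p1 ^^ k) u)"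
  by (induction k) (simp_all add: klinearD funpow_Hom)

lemma klinear_funpow_zer: "is_klinear_fam R D \<Longrightarrow> p0 \<in> Ob R \<Longrightarrow> p1 \<in> Ob R \<Longrightarrow> (D p0 p1 ^^ k) (zer R p0 p1) = zer R p0 p1"
  by (induction k) (simp_all add: klinear_zer)

lemma klinear_funpow_finsum:
  assumes kl: "is_klinear_fam R D" and o: "p0 \<in> Ob R" "p1 \<in> Ob R" and f: "\<And>i. f i \<in> Hom R p0 p1" and fin: "finite A"
  shows "(D p0 p1 ^^ a) (finsum (hom_group R p0 p1) f A) = finsum (hom_group R p0 p1) (\<lambda>i. (D p0 p1 ^^ a) (f i)) A"
proof -
  interpret M: kmodule "hom_group R p0 p1" "smult R p0 p1" by (rule kmodule_hom_group[OF o])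
  show ?thesis
    by (rule additive_finsum[OF M.abelian_group_axioms M.abelian_group_axioms])
       (use klinear_funpow_add[OF kl o] funpow_Hom[OF kl o] klinear_funpow_zer[OF kl o] f fin in auto)
qed

lemma funpow_Fil: assumes "\<And>x. x \<in> Fil R l p0 p1 \<Longrightarrow> D p0 p1 x \<in> Fil R l p0 p1"
  shows "x \<in> Fil R l p0 p1 \<Longrightarrow> (D p0 p1 ^^ k) x \<in> Fil R l p0 p1"
  by (induction k) (simp_all add: assms)

lemma derivationD:
  assumes "is_derivation R D" "p0 \<in> Ob R" "p1 \<in> Ob R" "p2 \<in> Ob R" "u \<in> Hom R p0 p1" "v \<in> Hom R p1 p2"
  shows "D p0 p2 (mul R p0 p1 p2 u v) = sac.add R p0 p2 (mul R p0 p1 p2 (D p0 p1 u) v) (mul R p0 p1 p2 u (D p1 p2 v))"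
  using assms unfolding is_derivation_def by simp

lemma derivation_idm: assumes d: "is_derivation R D" and p: "p \<in> Ob R" shows "D p p (idm R p) = zer R p p"
proof -
  have kl: "is_klinear_fam R D" using d unfolding is_derivation_def by simp
  interpret M: kmodule "hom_group R p p" "smult R p p" by (rule kmodule_hom_group[OF p p])
  have i: "idm R p \<in> Hom R p p" using p by simp
  have Di: "D p p (idm R p) \<in> Hom R p p" using klinearD(1)[OF kl p p i] .
  have "D p p (idm R p) = D p p (mul R p p p (idm R p) (idm R p))" using mul_idm[OF p p i] by simp
  also have "\<dots> = sac.add R p p (D p p (idm R p)) (D p p (idm R p))"
    using derivationD[OF d p p p i i] mul_idm[OF p p Di] by simp
  finally have "D p p (idm R p) = D p p (idm R p) \<oplus>\<^bsub>hom_group R p p\<^esub> D p p (idm R p)"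
    by simp
  then show ?thesis using M.add.l_cancel_one'[of "D p p (idm R p)" "D p p (idm R p)"] Di by simp
qed

lemma cond_i_iiiD:
  assumes "cond_i_iii R D"
  shows "is_derivation R D" "is_klinear_fam R D"
    "p0 \<in> Ob R \<Longrightarrow> p1 \<in> Ob R \<Longrightarrow> u \<in> Fil R l p0 p1 \<Longrightarrow> D p0 p1 u \<in> Fil R l p0 p1"
    "p0 \<in> Ob R \<Longrightarrow> p1 \<in> Ob R \<Longrightarrow> \<exists>\<nu>::nat. \<nu> > 0 \<and> (\<forall>u\<in>Fil R 1 p0 p1. (D p0 p1 ^^ \<nu>) u \<in> Fil R 2 p0 p1)"
    "p0 \<in> Ob R \<Longrightarrow> p1 \<in> Ob R \<Longrightarrow> u \<in> Hom R p0 p1 \<Longrightarrow> D p0 p1 u \<in> Fil R 1 p0 p1"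
  using assms unfolding cond_i_iii_def in_FDer_def is_derivation_def by simp_all

definition gr_nilpotent :: "('o, 'm) famap \<Rightarrow> 'o \<Rightarrow> 'o \<Rightarrow> nat \<Rightarrow> bool" where
  "gr_nilpotent D p0 p1 l \<longleftrightarrow> (\<exists>N. \<forall>x\<in>Fil R l p0 p1. (D p0 p1 ^^ N) x \<in> Fil R (Suc l) p0 p1)"

lemma gr_nilpotent_mul:
  assumes d: "is_derivation R D" and F: "\<And>p0 p1 l u. p0 \<in> Ob R \<Longrightarrow> p1 \<in> Ob R \<Longrightarrow> u \<in> Fil R l p0 p1 \<Longrightarrow> D p0 p1 u \<in> Fil R l p0 p1"
    and o: "p0 \<in> Ob R" "p1 \<in> Ob R" "p2 \<in> Ob R"
    and x: "x \<in> Fil R i p0 p1" and y: "y \<in> Fil R j p1 p2"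
    and hx: "(D p0 p1 ^^ A) x \<in> Fil R (Suc i) p0 p1" and hy: "(D p1 p2 ^^ B) y \<in> Fil R (Suc j) p1 p2"
  shows "(D p0 p2 ^^ (A + B)) (mul R p0 p1 p2 x y) \<in> Fil R (Suc (i + j)) p0 p2"
proof -
  have kl: "is_klinear_fam R D" using d unfolding is_derivation_def by simp
  interpret M: kmodule "hom_group R p0 p2" "smult R p0 p2" by (rule kmodule_hom_group[OF o(1,3)])
  have xh: "x \<in> Hom R p0 p1" using Fil_in_Hom[OF o(1,2) x] .
  have yh: "y \<in> Hom R p1 p2" using Fil_in_Hom[OF o(2,3) y] .
  let ?t = "\<lambda>a b. mul R p0 p1 p2 ((D p0 p1 ^^ a) x) ((D p1 p2 ^^ b) y)"
  have tc: "?t a b \<in> Hom R p0 p2" for a b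
    using funpow_Hom[OF kl o(1,2) xh] funpow_Hom[OF kl o(2,3) yh] o by simp
  have B: "(D p0 p2 ^^ (A + B)) (?t 0 0) = finsum (hom_group R p0 p2) (\<lambda>k. smult R p0 p2 (of_nat ((A + B) choose k)) (?t k (A + B - k))) {..A + B}"
    apply (rule M.funpow_Leibniz)
    using klinearD[OF kl o(1,3)] tc derivationD[OF d o] funpow_Hom[OF kl o(1,2) xh] funpow_Hom[OF kl o(2,3) yh]
      by simp_all
  have PF: "(D p0 p1 ^^ k) u \<in> Fil R l p0 p1" if "p0 \<in> Ob R" "p1 \<in> Ob R" "u \<in> Fil R l p0 p1" for p0 p1 l u k
    using funpow_Fil[of l p0 p1 D, OF F[OF that(1,2)] that(3)] .
  have tS: "?t k (A + B - k) \<in> Fil R (Suc (i + j)) p0 p2" for k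
  proof (cases "A \<le> k")
    case True
    then have xk: "(D p0 p1 ^^ k) x \<in> Fil R (Suc i) p0 p1"
      using funpow_split[OF True, of "D p0 p1" x] PF[OF o(1,2) hx] by simp
    show ?thesis using Fil_mul[OF o xk PF[OF o(2,3) y, of "A + B - k"]] by simp
  next
    case False
    then have "B \<le> A + B - k" by simp
    then have yk: "(D p1 p2 ^^ (A + B - k)) y \<in> Fil R (Suc j) p1 p2"
      using funpow_split[of B "A + B - k" "D p1 p2" y] PF[OF o(2,3) hy] by simp
    show ?thesis using Fil_mul[OF o PF[OF o(1,2) x, of k] yk] by simp
  qed
  have "finsum (hom_group R p0 p2) (\<lambda>k. smult R p0 p2 (of_nat ((A + B) choose k)) (?t k (A + B - k))) {..A + B} \<in> Fil R (Suc (i + j)) p0 p2"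
    by (rule M.submodule_finsum[OF Fil_submodule[OF o(1,3)]]) (use tS o in auto)
  then show ?thesis using B by simp
qed

lemma lprod_Fil:
  assumes q: "q \<in> Ob R"
  shows "us \<noteq> [] \<Longrightarrow> set us \<subseteq> Fil R 1 q q \<Longrightarrow> lprod R q us \<in> Fil R (length us) q q"
proof (induction us)
  case Nil then show ?case by simp
next
  case (Cons u us)
  show ?case
  proof (cases "us = []")
    case True then show ?thesis using Cons by simp
  next
    case False
    then obtain v vs where us: "us = v # vs" by (cases us) auto
    have "lprod R q (u # us) = mul R q q q u (lprod R q us)" using us by simp
    moreover have "lprod R q us \<in> Fil R (length us) q q" using Cons False by simp
    moreover have "u \<in> Fil R 1 q q" using Cons by simp
    ultimately show ?thesis using Fil_mul[OF q q q, of u 1 "lprod R q us" "length us"] by simp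
  qed
qed

lemma lprod_gr_nilpotent:
  assumes d: "is_derivation R D" and F: "\<And>p0 p1 l u. p0 \<in> Ob R \<Longrightarrow> p1 \<in> Ob R \<Longrightarrow> u \<in> Fil R l p0 p1 \<Longrightarrow> D p0 p1 u \<in> Fil R l p0 p1"
    and q: "q \<in> Ob R" and nu: "\<forall>u\<in>Fil R 1 q q. (D q q ^^ \<nu>) u \<in> Fil R 2 q q"
  shows "us \<noteq> [] \<Longrightarrow> set us \<subseteq> Fil R 1 q q \<Longrightarrow> (D q q ^^ (length us * \<nu>)) (lprod R q us) \<in> Fil R (Suc (length us)) q q"
proof (induction us)
  case Nil then show ?case by simp
next
  case (Cons u us)
  show ?case
  proof (cases "us = []")
    case True then show ?thesis using Cons nu by (simp add: numeral_2_eq_2)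
  next
    case False
    then obtain v vs where us: "us = v # vs" by (cases us) auto
    have l: "lprod R q (u # us) = mul R q q q u (lprod R q us)" using us by simp
    have u: "u \<in> Fil R 1 q q" using Cons by simp
    have hu: "(D q q ^^ \<nu>) u \<in> Fil R (Suc 1) q q" using nu u by (simp add: numeral_2_eq_2)
    have y: "lprod R q us \<in> Fil R (length us) q q" using lprod_Fil[OF q] Cons False by simp
    have hy: "(D q q ^^ (length us * \<nu>)) (lprod R q us) \<in> Fil R (Suc (length us)) q q"
      using Cons False by simp
    have "(D q q ^^ (\<nu> + length us * \<nu>)) (mul R q q q u (lprod R q us)) \<in> Fil R (Suc (1 + length us)) q q"
      by (rule gr_nilpotent_mul[OF d F q q q u y hu hy])
    then show ?thesis using l by simp
  qed
qed

lemma finsums_Hom: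
  assumes q: "q \<in> Ob R" and S: "S \<subseteq> Hom R q q"
  shows "x \<in> finsums R q q S \<Longrightarrow> x \<in> Hom R q q"
  by (induction rule: finsums.induct) (use q S in auto)

lemma finsums_funpow_Fil:
  assumes kl: "is_klinear_fam R D" and q: "q \<in> Ob R" and S: "S \<subseteq> Hom R q q"
    and h: "\<And>s. s \<in> S \<Longrightarrow> (D q q ^^ N) s \<in> Fil R m q q"
  shows "x \<in> finsums R q q S \<Longrightarrow> (D q q ^^ N) x \<in> Fil R m q q"
proof (induction rule: finsums.induct)
  case 1 then show ?case using klinear_funpow_zer[OF kl q q] q by simp
next
  case (2 x y)
  have "y \<in> Hom R q q" using finsums_Hom[OF q S 2(2)] .
  moreover have "x \<in> Hom R q q" using 2(1) S by blast
  ultimately show ?case using klinear_funpow_add[OF kl q q] 2 h q by simp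
qed

lemma commute_funpow:
  assumes kl: "is_klinear_fam R D" and c: "der_commute R D D'"
    and o: "p0 \<in> Ob R" "p1 \<in> Ob R"
  shows "u \<in> Hom R p0 p1 \<Longrightarrow> D' p0 p1 ((D p0 p1 ^^ a) u) = (D p0 p1 ^^ a) (D' p0 p1 u)"
proof (induction a arbitrary: u)
  case 0 then show ?case by simp
next
  case (Suc a)
  have "D' p0 p1 ((D p0 p1 ^^ Suc a) u) = D' p0 p1 ((D p0 p1 ^^ a) (D p0 p1 u))"
    by (simp add: funpow_Suc_right del: funpow.simps)
  also have "\<dots> = (D p0 p1 ^^ a) (D' p0 p1 (D p0 p1 u))" using Suc klinearD(1)[OF kl o] by simp
  also have "\<dots> = (D p0 p1 ^^ a) (D p0 p1 (D' p0 p1 u))" using c Suc o unfolding der_commute_def by simp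
  also have "\<dots> = (D p0 p1 ^^ Suc a) (D' p0 p1 u)" by (simp add: funpow_Suc_right del: funpow.simps)
  finally show ?case .
qed

lemma der_add_klinear: assumes kl: "is_klinear_fam R D" and kl': "is_klinear_fam R D'"
  shows "is_klinear_fam R (der_add R D D')"
  unfolding is_klinear_fam_def der_add_def
  using klinearD[OF kl] klinearD[OF kl'] hom_add_add_swap hom_sm_add_right by simp

lemma der_add_derivation:
  assumes d: "is_derivation R D" and d': "is_derivation R D'"
  shows "is_derivation R (der_add R D D')"
  unfolding is_derivation_def
proof (intro conjI ballI der_add_klinear)
  show "is_klinear_fam R D" "is_klinear_fam R D'" using d d' unfolding is_derivation_def by simp_all
  fix p0 p1 p2 u v assume o: "p0 \<in> Ob R" "p1 \<in> Ob R" "p2 \<in> Ob R" and u: "u \<in> Hom R p0 p1" and v: "v \<in> Hom R p1 p2"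
  have kl: "is_klinear_fam R D" "is_klinear_fam R D'" using d d' unfolding is_derivation_def by simp_all
  show "der_add R D D' p0 p2 (mul R p0 p1 p2 u v) = sac.add R p0 p2 (mul R p0 p1 p2 (der_add R D D' p0 p1 u) v)
         (mul R p0 p1 p2 u (der_add R D D' p1 p2 v))"
    unfolding der_add_def using derivationD[OF d o u v] derivationD[OF d' o u v]
      klinearD(1)[OF kl(1)] klinearD(1)[OF kl(2)] o u v mul_add_left mul_add_right hom_add_add_swap by simp
qed

lemma der_add_funpow_binomial:
  assumes kl: "is_klinear_fam R D" and kl': "is_klinear_fam R D'" and c: "der_commute R D D'"
    and o: "p0 \<in> Ob R" "p1 \<in> Ob R" and x: "x \<in> Hom R p0 p1"
  shows "(der_add R D D' p0 p1 ^^ n) x = finsum (hom_group R p0 p1) (\<lambda>k. smult R p0 p1 (of_nat (n choose k)) ((D p0 p1 ^^ k) ((D' p0 p1 ^^ (n - k)) x))) {..n}"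
proof -
  interpret M: kmodule "hom_group R p0 p1" "smult R p0 p1" by (rule kmodule_hom_group[OF o])
  note kls = der_add_klinear[OF kl kl']
  let ?t = "\<lambda>a b. (D p0 p1 ^^ a) ((D' p0 p1 ^^ b) x)"
  have tc: "?t a b \<in> Hom R p0 p1" for a b using funpow_Hom[OF kl o] funpow_Hom[OF kl' o] x by simp
  have "(der_add R D D' p0 p1 ^^ n) (?t 0 0) = finsum (hom_group R p0 p1) (\<lambda>k. smult R p0 p1 (of_nat (n choose k)) (?t k (n - k))) {..n}"
  proof (rule M.funpow_Leibniz)
    show "\<And>a b. der_add R D D' p0 p1 (?t a b) = ?t (Suc a) b \<oplus>\<^bsub>hom_group R p0 p1\<^esub> ?t a (Suc b)"
      unfolding der_add_def using commute_funpow[OF kl c o] funpow_Hom[OF kl' o] x by simp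
  qed (use klinearD[OF kls o] tc in simp_all)
  then show ?thesis by simp
qed

lemma der_add_funpow_Fil_2:
  assumes c1: "cond_i_iii R D" and c2: "cond_i_iii R D'" and c: "der_commute R D D'"
    and o: "p0 \<in> Ob R" "p1 \<in> Ob R"
    and a: "\<forall>u\<in>Fil R 1 p0 p1. (D p0 p1 ^^ a) u \<in> Fil R 2 p0 p1"
    and b: "\<forall>u\<in>Fil R 1 p0 p1. (D' p0 p1 ^^ b) u \<in> Fil R 2 p0 p1"
    and u: "u \<in> Fil R 1 p0 p1"
  shows "(der_add R D D' p0 p1 ^^ (a + b)) u \<in> Fil R 2 p0 p1"
proof -
  interpret M: kmodule "hom_group R p0 p1" "smult R p0 p1" by (rule kmodule_hom_group[OF o])
  have PF: "(D p0 p1 ^^ k) x \<in> Fil R l p0 p1" "(D' p0 p1 ^^ k) x \<in> Fil R l p0 p1"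
    if "x \<in> Fil R l p0 p1" for k l x
    using funpow_Fil[of l p0 p1 D] funpow_Fil[of l p0 p1 D'] cond_i_iiiD(3)[OF c1 o] cond_i_iiiD(3)[OF c2 o]
      that by blast+
  have "(D p0 p1 ^^ k) ((D' p0 p1 ^^ (a + b - k)) u) \<in> Fil R 2 p0 p1" for k
  proof (cases "a \<le> k")
    case True
    then show ?thesis using funpow_split[OF True, of "D p0 p1"] PF a PF(2)[OF u] by simp
  next
    case False
    then have "b \<le> a + b - k" by simp
    then show ?thesis using funpow_split[of b "a + b - k" "D' p0 p1"] PF b u by simp
  qed
  then show ?thesis
    unfolding der_add_funpow_binomial[OF cond_i_iiiD(2)[OF c1] cond_i_iiiD(2)[OF c2] c o Fil_in_Hom[OF o u]]
    by (intro M.submodule_finsum[OF Fil_submodule[OF o]]) (use o in auto)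
qed

lemma der_add_cond_i_iii:
  assumes c1: "cond_i_iii R D" and c2: "cond_i_iii R D'" and c: "der_commute R D D'"
  shows "cond_i_iii R (der_add R D D')"
proof -
  have der: "is_derivation R (der_add R D D')"
    by (rule der_add_derivation[OF cond_i_iiiD(1)[OF c1] cond_i_iiiD(1)[OF c2]])
  have F: "der_add R D D' p0 p1 u \<in> Fil R l p0 p1" if "p0 \<in> Ob R" "p1 \<in> Ob R" "u \<in> Fil R l p0 p1" for p0 p1 l u
    unfolding der_add_def using cond_i_iiiD(3)[OF c1 that] cond_i_iiiD(3)[OF c2 that] that by simp
  have ii: "\<exists>\<nu>::nat. \<nu> > 0 \<and> (\<forall>u\<in>Fil R 1 p0 p1. (der_add R D D' p0 p1 ^^ \<nu>) u \<in> Fil R 2 p0 p1)"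
    if o: "p0 \<in> Ob R" "p1 \<in> Ob R" for p0 p1
  proof -
    obtain a where a: "a > 0" "\<forall>u\<in>Fil R 1 p0 p1. (D p0 p1 ^^ a) u \<in> Fil R 2 p0 p1"
      using cond_i_iiiD(4)[OF c1 o] by blast
    obtain b where b: "\<forall>u\<in>Fil R 1 p0 p1. (D' p0 p1 ^^ b) u \<in> Fil R 2 p0 p1"
      using cond_i_iiiD(4)[OF c2 o] by blast
    show ?thesis using a der_add_funpow_Fil_2[OF c1 c2 c o a(2) b] by (intro exI[of _ "a + b"]) auto
  qed
  have iii: "der_add R D D' p0 p1 u \<in> Fil R 1 p0 p1" if "p0 \<in> Ob R" "p1 \<in> Ob R" "u \<in> Hom R p0 p1" for p0 p1 u
    unfolding der_add_def using cond_i_iiiD(5)[OF c1 that] cond_i_iiiD(5)[OF c2 that] that by simp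
  show ?thesis unfolding cond_i_iii_def in_FDer_def using der F ii iii by simp
qed

definition der_scale :: "'k \<Rightarrow> ('o, 'm) famap \<Rightarrow> ('o, 'm) famap" where
  "der_scale c D = (\<lambda>p0 p1 u. smult R p0 p1 c (D p0 p1 u))"

lemma der_scale_klinear: "is_klinear_fam R D \<Longrightarrow> is_klinear_fam R (der_scale c D)"
  unfolding is_klinear_fam_def der_scale_def using hom_sm_add_right hom_sm_commute by simp

lemma der_scale_funpow:
  assumes kl: "is_klinear_fam R D" and o: "p0 \<in> Ob R" "p1 \<in> Ob R" and u: "u \<in> Hom R p0 p1"
  shows "(der_scale c D p0 p1 ^^ k) u = smult R p0 p1 (c ^ k) ((D p0 p1 ^^ k) u)"
proof (induction k)
  case 0 then show ?case using hom_sm_one[OF o u] by simp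
next
  case (Suc k)
  then show ?case unfolding der_scale_def
    using klinearD(3)[OF kl o] funpow_Hom[OF kl o u] klinearD(1)[OF kl o]
      hom_sm_mult[OF o, symmetric] o by simp
qed

lemma der_scale_derivation:
  assumes d: "is_derivation R D"
  shows "is_derivation R (der_scale a D)"
  unfolding is_derivation_def
proof (intro conjI ballI der_scale_klinear)
  show kl: "is_klinear_fam R D" using d unfolding is_derivation_def by simp
  fix p0 p1 p2 u v assume o: "p0 \<in> Ob R" "p1 \<in> Ob R" "p2 \<in> Ob R" and u: "u \<in> Hom R p0 p1" and v: "v \<in> Hom R p1 p2"
  show "der_scale a D p0 p2 (mul R p0 p1 p2 u v)
      = sac.add R p0 p2 (mul R p0 p1 p2 (der_scale a D p0 p1 u) v) (mul R p0 p1 p2 u (der_scale a D p1 p2 v))"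
    unfolding der_scale_def using derivationD[OF d o u v] klinearD(1)[OF kl] o u v mul_sm_left mul_sm_right
      hom_sm_add_right by simp
qed

lemma der_scale_cond_i_iii: assumes c: "cond_i_iii R D" shows "cond_i_iii R (der_scale a D)"
proof -
  note kl = cond_i_iiiD(2)[OF c]
  have der: "is_derivation R (der_scale a D)" by (rule der_scale_derivation[OF cond_i_iiiD(1)[OF c]])
  have F: "der_scale a D p0 p1 u \<in> Fil R l p0 p1" if "p0 \<in> Ob R" "p1 \<in> Ob R" "u \<in> Fil R l p0 p1" for p0 p1 l u
    unfolding der_scale_def using cond_i_iiiD(3)[OF c that] that by simp
  have ii: "\<exists>\<nu>::nat. \<nu> > 0 \<and> (\<forall>u\<in>Fil R 1 p0 p1. (der_scale a D p0 p1 ^^ \<nu>) u \<in> Fil R 2 p0 p1)"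
    if o: "p0 \<in> Ob R" "p1 \<in> Ob R" for p0 p1
  proof -
    obtain \<nu> where nu: "\<nu> > 0" "\<forall>u\<in>Fil R 1 p0 p1. (D p0 p1 ^^ \<nu>) u \<in> Fil R 2 p0 p1"
      using cond_i_iiiD(4)[OF c o] by blast
    have "(der_scale a D p0 p1 ^^ \<nu>) u \<in> Fil R 2 p0 p1" if u: "u \<in> Fil R 1 p0 p1" for u
      using der_scale_funpow[OF kl o Fil_in_Hom[OF o u]] nu u o by simp
    then show ?thesis using nu by blast
  qed
  have iii: "der_scale a D p0 p1 u \<in> Fil R 1 p0 p1" if "p0 \<in> Ob R" "p1 \<in> Ob R" "u \<in> Hom R p0 p1" for p0 p1 u
    unfolding der_scale_def using cond_i_iiiD(5)[OF c that] that by simp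
  show ?thesis unfolding cond_i_iii_def in_FDer_def using der F ii iii by simp
qed

lemma der_scale_commute:
  assumes kl: "is_klinear_fam R D"
  shows "der_commute R (der_scale a D) (der_scale b D)"
  unfolding der_commute_def der_scale_def using klinearD[OF kl] hom_sm_commute by simp

text \<open>The operators whose exponential converges and behaves well; by (C2), conditions (i)--(iii)
  imply these properties.\<close>

definition top_nilpotent :: "('o, 'm) famap \<Rightarrow> bool" where
  "top_nilpotent D \<longleftrightarrow> is_klinear_fam R D \<and>
     (\<forall>p0\<in>Ob R. \<forall>p1\<in>Ob R. \<forall>l. \<forall>x\<in>Fil R l p0 p1. D p0 p1 x \<in> Fil R l p0 p1) \<and>
     (\<forall>p0\<in>Ob R. \<forall>p1\<in>Ob R. \<forall>n. \<exists>T. \<forall>x\<in>Hom R p0 p1. (D p0 p1 ^^ T) x \<in> Fil R n p0 p1)"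

lemma top_nilpotentD:
  assumes "top_nilpotent D" "p0 \<in> Ob R" "p1 \<in> Ob R"
  shows "is_klinear_fam R D" "x \<in> Fil R l p0 p1 \<Longrightarrow> D p0 p1 x \<in> Fil R l p0 p1"
    "\<exists>T. \<forall>x\<in>Hom R p0 p1. (D p0 p1 ^^ T) x \<in> Fil R n p0 p1"
  using assms unfolding top_nilpotent_def by simp_all

lemma top_nilpotent_funpow_Fil: "top_nilpotent D \<Longrightarrow> p0 \<in> Ob R \<Longrightarrow> p1 \<in> Ob R \<Longrightarrow> x \<in> Fil R l p0 p1 \<Longrightarrow> (D p0 p1 ^^ k) x \<in> Fil R l p0 p1"
  using funpow_Fil[of l p0 p1 D] top_nilpotentD by blast

lemma top_nilpotent_funpow_eventually: assumes "top_nilpotent D" "p0 \<in> Ob R" "p1 \<in> Ob R"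
  shows "\<exists>T. \<forall>k\<ge>T. \<forall>x\<in>Hom R p0 p1. (D p0 p1 ^^ k) x \<in> Fil R n p0 p1"
proof -
  obtain T where T: "\<forall>x\<in>Hom R p0 p1. (D p0 p1 ^^ T) x \<in> Fil R n p0 p1"
    using top_nilpotentD(3)[OF assms] by blast
  have "(D p0 p1 ^^ k) x \<in> Fil R n p0 p1" if "k \<ge> T" "x \<in> Hom R p0 p1" for k x
  proof -
    have "(D p0 p1 ^^ k) x = (D p0 p1 ^^ (k - T)) ((D p0 p1 ^^ T) x)"
      using that(1) by (rule funpow_split)
    then show ?thesis using top_nilpotent_funpow_Fil[OF assms] T that by simp
  qed
  then show ?thesis by blast
qed

lemma exp_psum_Hom: "is_klinear_fam R D \<Longrightarrow> p0 \<in> Ob R \<Longrightarrow> p1 \<in> Ob R \<Longrightarrow> u \<in> Hom R p0 p1 \<Longrightarrow>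
   exp_psum R D p0 p1 u N \<in> Hom R p0 p1"
  by (induction N) (simp_all add: funpow_Hom)

lemma exp_psum_cauchy:
  assumes kl: "is_klinear_fam R D" and o: "p0 \<in> Ob R" "p1 \<in> Ob R" and u: "u \<in> Hom R p0 p1"
    and T: "\<And>k. k \<ge> T \<Longrightarrow> (D p0 p1 ^^ k) u \<in> Fil R n p0 p1"
  shows "N \<ge> T \<Longrightarrow> hsub R p0 p1 (exp_psum R D p0 p1 u N) (exp_psum R D p0 p1 u T) \<in> Fil R n p0 p1"
proof (induction N rule: dec_induct)
  case base then show ?case using fil_cong_refl[OF o exp_psum_Hom[OF kl o u]] by simp
next
  case (step N)
  show ?case
    using fil_cong_add_member[OF o exp_psum_Hom[OF kl o u] exp_psum_Hom[OF kl o u] hom_sm[OF o funpow_Hom[OF kl o u]] step(3)]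
      T step(1) o by simp
qed

lemma exp_psum_finsum:
  assumes kl: "is_klinear_fam R D" and o: "p0 \<in> Ob R" "p1 \<in> Ob R" and u: "u \<in> Hom R p0 p1"
  shows "exp_psum R D p0 p1 u N = finsum (hom_group R p0 p1) (\<lambda>k. smult R p0 p1 (inv_nat (fact k)) ((D p0 p1 ^^ k) u)) {..<N}"
proof (induction N)
  interpret M: kmodule "hom_group R p0 p1" "smult R p0 p1" by (rule kmodule_hom_group[OF o])
  case 0 then show ?case by simp
next
  interpret M: kmodule "hom_group R p0 p1" "smult R p0 p1" by (rule kmodule_hom_group[OF o])
  case (Suc N)
  have "finsum (hom_group R p0 p1) (\<lambda>k. smult R p0 p1 (inv_nat (fact k)) ((D p0 p1 ^^ k) u)) {..<Suc N}
     = sac.add R p0 p1 (smult R p0 p1 (inv_nat (fact N)) ((D p0 p1 ^^ N) u))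
        (finsum (hom_group R p0 p1) (\<lambda>k. smult R p0 p1 (inv_nat (fact k)) ((D p0 p1 ^^ k) u)) {..<N})"
    unfolding lessThan_Suc by (subst M.finsum_insert) (auto simp: funpow_Hom[OF kl o u] o)
  moreover have "finsum (hom_group R p0 p1) (\<lambda>k. smult R p0 p1 (inv_nat (fact k)) ((D p0 p1 ^^ k) u)) {..<N} \<in> Hom R p0 p1"
    using M.finsum_closed[of "\<lambda>k. smult R p0 p1 (inv_nat (fact k)) ((D p0 p1 ^^ k) u)" "{..<N}"]
      funpow_Hom[OF kl o u] o by (simp add: Pi_def)
  moreover have "smult R p0 p1 (inv_nat (fact N)) ((D p0 p1 ^^ N) u) \<in> Hom R p0 p1"
    using funpow_Hom[OF kl o u] o by simp
  ultimately show ?case using Suc M.a_comm by simp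
qed

lemma exp_psum_add:
  assumes kl: "is_klinear_fam R D" and o: "p0 \<in> Ob R" "p1 \<in> Ob R" and u: "u \<in> Hom R p0 p1" and v: "v \<in> Hom R p0 p1"
  shows "exp_psum R D p0 p1 (sac.add R p0 p1 u v) N = sac.add R p0 p1 (exp_psum R D p0 p1 u N) (exp_psum R D p0 p1 v N)"
proof -
  interpret M: kmodule "hom_group R p0 p1" "smult R p0 p1" by (rule kmodule_hom_group[OF o])
  have uv: "sac.add R p0 p1 u v \<in> Hom R p0 p1" using o u v by simp
  have "finsum (hom_group R p0 p1) (\<lambda>k. smult R p0 p1 (inv_nat (fact k)) ((D p0 p1 ^^ k) (sac.add R p0 p1 u v))) {..<N}
     = finsum (hom_group R p0 p1) (\<lambda>k. sac.add R p0 p1 (smult R p0 p1 (inv_nat (fact k)) ((D p0 p1 ^^ k) u))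
           (smult R p0 p1 (inv_nat (fact k)) ((D p0 p1 ^^ k) v))) {..<N}"
    by (rule M.finsum_cong') (auto simp: klinear_funpow_add[OF kl o u v] hom_sm_add_right[OF o] funpow_Hom[OF kl o] u v o)
  also have "\<dots> = sac.add R p0 p1 (finsum (hom_group R p0 p1) (\<lambda>k. smult R p0 p1 (inv_nat (fact k)) ((D p0 p1 ^^ k) u)) {..<N})
     (finsum (hom_group R p0 p1) (\<lambda>k. smult R p0 p1 (inv_nat (fact k)) ((D p0 p1 ^^ k) v)) {..<N})"
    using M.finsum_addf[of "\<lambda>k. smult R p0 p1 (inv_nat (fact k)) ((D p0 p1 ^^ k) u)" "{..<N}"
        "\<lambda>k. smult R p0 p1 (inv_nat (fact k)) ((D p0 p1 ^^ k) v)"] funpow_Hom[OF kl o] u v o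
          by (simp add: Pi_def)
  finally show ?thesis
    unfolding exp_psum_finsum[OF kl o u] exp_psum_finsum[OF kl o v] exp_psum_finsum[OF kl o uv] .
qed

lemma exp_psum_sm:
  assumes kl: "is_klinear_fam R D" and o: "p0 \<in> Ob R" "p1 \<in> Ob R" and u: "u \<in> Hom R p0 p1"
  shows "exp_psum R D p0 p1 (smult R p0 p1 a u) N = smult R p0 p1 a (exp_psum R D p0 p1 u N)"
proof -
  interpret M: kmodule "hom_group R p0 p1" "smult R p0 p1" by (rule kmodule_hom_group[OF o])
  have au: "smult R p0 p1 a u \<in> Hom R p0 p1" using o u by simp
  have c: "smult R p0 p1 (inv_nat (fact k)) (smult R p0 p1 a x) = smult R p0 p1 a (smult R p0 p1 (inv_nat (fact k)) x)"
    if "x \<in> Hom R p0 p1" for x k using that M.sm_mult[symmetric] by (simp add: mult.commute)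
  show ?thesis
    unfolding exp_psum_finsum[OF kl o u] exp_psum_finsum[OF kl o au]
    by (subst M.sm_finsum) (auto simp: klinear_funpow_sm[OF kl o u] c funpow_Hom[OF kl o u] o)
qed

lemma exp_psum_hsub:
  assumes kl: "is_klinear_fam R D" and o: "p0 \<in> Ob R" "p1 \<in> Ob R" and u: "u \<in> Hom R p0 p1" and v: "v \<in> Hom R p0 p1"
  shows "exp_psum R D p0 p1 (hsub R p0 p1 u v) N = hsub R p0 p1 (exp_psum R D p0 p1 u N) (exp_psum R D p0 p1 v N)"
  unfolding hsub_def using exp_psum_add[OF kl o u] exp_psum_sm[OF kl o v] o u v by simp

lemma exp_psum_Fil:
  assumes g: "top_nilpotent D" and o: "p0 \<in> Ob R" "p1 \<in> Ob R" and u: "u \<in> Fil R n p0 p1"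
  shows "exp_psum R D p0 p1 u N \<in> Fil R n p0 p1"
  by (induction N) (simp_all add: o top_nilpotent_funpow_Fil[OF g o u])

lemma exp_psum_fil_cong:
  assumes g: "top_nilpotent D" and o: "p0 \<in> Ob R" "p1 \<in> Ob R" and u: "u \<in> Hom R p0 p1" and v: "v \<in> Hom R p0 p1"
    and h: "hsub R p0 p1 u v \<in> Fil R n p0 p1"
  shows "hsub R p0 p1 (exp_psum R D p0 p1 u N) (exp_psum R D p0 p1 v N) \<in> Fil R n p0 p1"
  using exp_psum_hsub[OF top_nilpotentD(1)[OF g o] o u v] exp_psum_Fil[OF g o h] by simp

lemma der_exp_cong:
  assumes kl: "is_klinear_fam R D'" and o: "p0 \<in> Ob R" "p1 \<in> Ob R"
    and e: "\<And>v. v \<in> Hom R p0 p1 \<Longrightarrow> D p0 p1 v = D' p0 p1 v" and u: "u \<in> Hom R p0 p1"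
  shows "der_exp R D p0 p1 u = der_exp R D' p0 p1 u"
proof -
  have "(D p0 p1 ^^ k) u = (D' p0 p1 ^^ k) u" for k
    by (induction k) (simp_all add: e funpow_Hom[OF kl o u])
  then have "exp_psum R D p0 p1 u N = exp_psum R D' p0 p1 u N" for N
    by (induction N) simp_all
  then show ?thesis unfolding der_exp_def by presburger
qed

end

locale complete_filtered_KSAC = filtered_KSAC R for R :: "('o, 'k::comm_ring_1, 'm) sac" +
  assumes C3: "cond_C3 R"
begin

lemma C3_separated: "q \<in> Ob R \<Longrightarrow> x \<in> Hom R q q \<Longrightarrow> \<forall>n. x \<in> Fil R n q q \<Longrightarrow> x = zer R q q"
  using C3 unfolding cond_C3_def by blast

lemma C3_complete:
  "q \<in> Ob R \<Longrightarrow> \<forall>n. a n \<in> Hom R q q \<Longrightarrow> \<forall>n m. n \<le> m \<longrightarrow> hsub R q q (a m) (a n) \<in> Fil R n q q \<Longrightarrow>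
   \<exists>x\<in>Hom R q q. \<forall>n. hsub R q q x (a n) \<in> Fil R n q q"
  using C3 unfolding cond_C3_def by blast

text \<open>(C3) concerns endomorphism rings only; a nonzero hom-module \<open>R(p0, p1)\<close> is moved into
  \<open>R(p1, p1)\<close> by an isomorphism \<open>p0 \<cong> p1\<close>.\<close>

lemma Fil_separated:
  assumes o: "p0 \<in> Ob R" "p1 \<in> Ob R" and x: "x \<in> Hom R p0 p1" and h: "\<And>n. x \<in> Fil R n p0 p1"
  shows "x = zer R p0 p1"
  using Hom_trivial_or_iso[OF o]
proof
  assume "Hom R p0 p1 = {zer R p0 p1}" then show ?thesis using x by blast
next
  assume "\<exists>u v. u \<in> Hom R p0 p1 \<and> v \<in> Hom R p1 p0 \<and> mul R p0 p1 p0 u v = idm R p0 \<and> mul R p1 p0 p1 v u = idm R p1"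
  then obtain u v where uv: "u \<in> Hom R p0 p1" "v \<in> Hom R p1 p0" "mul R p0 p1 p0 u v = idm R p0"
    by blast
  have "\<forall>n. mul R p1 p0 p1 v x \<in> Fil R n p1 p1"
  proof
    fix n show "mul R p1 p0 p1 v x \<in> Fil R n p1 p1"
      using Fil_mul[OF o(2) o(1) o(2), of v 0 x n] Fil_0[OF o(2) o(1)] uv h by simp
  qed
  then have "mul R p1 p0 p1 v x = zer R p1 p1" using C3_separated[OF o(2)] o uv x by simp
  then show ?thesis using iso_factor[OF o uv x] mul_zer[OF o(1) o(2) o(2) uv(1) idm_closed[OF o(2)]] by simp
qed

lemma eq_if_fil_cong:
  assumes o: "p0 \<in> Ob R" "p1 \<in> Ob R" and x: "x \<in> Hom R p0 p1" "y \<in> Hom R p0 p1"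
  and h: "\<And>n. hsub R p0 p1 x y \<in> Fil R n p0 p1" shows "x = y"
  using Fil_separated[OF o _ h] hsub_eq_zer_imp_eq[OF o x] o x by simp

text \<open>(C3) only provides limits of sequences with \<open>a\<^sub>m \<equiv> a\<^sub>n mod F\<^sub>n\<close> for \<open>m \<ge> n\<close>;
  a general Cauchy sequence is reduced to this case by passing to a subsequence.\<close>

lemma endo_complete:
  fixes s :: "nat \<Rightarrow> 'm"
  assumes q: "q \<in> Ob R" and s: "\<And>N. s N \<in> Hom R q q"
    and c: "\<And>n. \<exists>T. \<forall>N\<ge>T. hsub R q q (s N) (s T) \<in> Fil R n q q"
  shows "\<exists>x\<in>Hom R q q. \<forall>n. \<exists>T. \<forall>N\<ge>T. hsub R q q (s N) x \<in> Fil R n q q"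
proof -
  define T where "T n = (SOME T. \<forall>N\<ge>T. hsub R q q (s N) (s T) \<in> Fil R n q q)" for n
  have T: "\<forall>N\<ge>T n. hsub R q q (s N) (s (T n)) \<in> Fil R n q q" for n
    unfolding T_def using someI_ex[OF c] .
  define M where "M n = (\<Sum>i\<le>n. T i)" for n
  have MT: "T n \<le> M n" for n unfolding M_def by (rule member_le_sum) auto
  have Mmono: "n \<le> m \<Longrightarrow> M n \<le> M m" for n m unfolding M_def by (rule sum_mono2) auto
  define a where "a n = s (M n)" for n
  have ah: "a n \<in> Hom R q q" for n using s a_def by simp
  have "\<forall>n m. n \<le> m \<longrightarrow> hsub R q q (a m) (a n) \<in> Fil R n q q"
  proof (intro allI impI)
    fix n m :: nat assume nm: "n \<le> m"
    have 1: "hsub R q q (s (M m)) (s (T n)) \<in> Fil R n q q" using T MT Mmono[OF nm] by (meson order_trans)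
    have 2: "hsub R q q (s (M n)) (s (T n)) \<in> Fil R n q q" using T MT by blast
    show "hsub R q q (a m) (a n) \<in> Fil R n q q" unfolding a_def
      by (rule fil_cong_trans[OF q q s s s 1 fil_cong_sym[OF q q s s 2]])
  qed
  then obtain x where x: "x \<in> Hom R q q" "\<And>n. hsub R q q x (a n) \<in> Fil R n q q"
    using C3_complete[OF q, of a] ah by blast
  have "\<forall>n. \<exists>T. \<forall>N\<ge>T. hsub R q q (s N) x \<in> Fil R n q q"
  proof
    fix n show "\<exists>T. \<forall>N\<ge>T. hsub R q q (s N) x \<in> Fil R n q q"
    proof (intro exI allI impI)
      fix N assume N: "M n \<le> N"
      have 1: "hsub R q q (s N) (s (T n)) \<in> Fil R n q q" using T MT N by (meson order_trans)
      have 2: "hsub R q q (s (M n)) (s (T n)) \<in> Fil R n q q" using T MT by blast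
      have 3: "hsub R q q (s (M n)) x \<in> Fil R n q q"
        using fil_cong_sym[OF q q x(1) ah x(2)[of n]] a_def by simp
      show "hsub R q q (s N) x \<in> Fil R n q q"
        by (rule fil_cong_trans[OF q q s s x(1) fil_cong_trans[OF q q s s s 1 fil_cong_sym[OF q q s s 2]] 3])
    qed
  qed
  then show ?thesis using x by blast
qed

lemma Hom_complete:
  fixes s :: "nat \<Rightarrow> 'm"
  assumes o: "p0 \<in> Ob R" "p1 \<in> Ob R" and s: "\<And>N. s N \<in> Hom R p0 p1"
    and c: "\<And>n. \<exists>T. \<forall>N\<ge>T. hsub R p0 p1 (s N) (s T) \<in> Fil R n p0 p1"
  shows "\<exists>x\<in>Hom R p0 p1. \<forall>n. \<exists>T. \<forall>N\<ge>T. hsub R p0 p1 (s N) x \<in> Fil R n p0 p1"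
  using Hom_trivial_or_iso[OF o]
proof
  assume H: "Hom R p0 p1 = {zer R p0 p1}"
  have "s N = zer R p0 p1" for N using s H by blast
  then show ?thesis using H fil_cong_refl[OF o] by auto
next
  assume "\<exists>u v. u \<in> Hom R p0 p1 \<and> v \<in> Hom R p1 p0 \<and> mul R p0 p1 p0 u v = idm R p0 \<and> mul R p1 p0 p1 v u = idm R p1"
  then obtain u v where uv: "u \<in> Hom R p0 p1" "v \<in> Hom R p1 p0" "mul R p0 p1 p0 u v = idm R p0"
    by blast
  define b where "b N = mul R p1 p0 p1 v (s N)" for N
  have bh: "b N \<in> Hom R p1 p1" for N unfolding b_def using o uv s by simp
  have "\<exists>T. \<forall>N\<ge>T. hsub R p1 p1 (b N) (b T) \<in> Fil R n p1 p1" for n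
    using c[of n] unfolding b_def by (meson fil_cong_mul_left[OF o(2) o(1) o(2) uv(2) s s])
  then obtain y where y: "y \<in> Hom R p1 p1" "\<And>n. \<exists>T. \<forall>N\<ge>T. hsub R p1 p1 (b N) y \<in> Fil R n p1 p1"
    using endo_complete[of p1 b, OF o(2) bh] by blast
  have sb: "s N = mul R p0 p1 p1 u (b N)" for N unfolding b_def by (rule iso_factor[OF o uv s])
  have "\<exists>T. \<forall>N\<ge>T. hsub R p0 p1 (s N) (mul R p0 p1 p1 u y) \<in> Fil R n p0 p1" for n
    using y(2)[of n] unfolding sb by (meson fil_cong_mul_left[OF o(1) o(2) o(2) uv(1) bh y(1)])
  then show ?thesis using o uv y by (intro bexI[of _ "mul R p0 p1 p1 u y"]) auto
qed

lemma der_exp_converges: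
  assumes g: "top_nilpotent D" and o: "p0 \<in> Ob R" "p1 \<in> Ob R" and u: "u \<in> Hom R p0 p1"
  shows "der_exp R D p0 p1 u \<in> Hom R p0 p1 \<and> fil_converges_to R p0 p1 (exp_psum R D p0 p1 u) (der_exp R D p0 p1 u)"
proof -
  note kl = top_nilpotentD(1)[OF g o]
  let ?s = "exp_psum R D p0 p1 u"
  have c: "\<exists>T. \<forall>N\<ge>T. hsub R p0 p1 (?s N) (?s T) \<in> Fil R n p0 p1" for n
  proof -
    obtain T where T: "\<forall>k\<ge>T. \<forall>x\<in>Hom R p0 p1. (D p0 p1 ^^ k) x \<in> Fil R n p0 p1"
      using top_nilpotent_funpow_eventually[OF g o] by blast
    show ?thesis using exp_psum_cauchy[OF kl o u, of T n] T u by blast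
  qed
  obtain x where x: "x \<in> Hom R p0 p1" "\<forall>n. \<exists>T. \<forall>N\<ge>T. hsub R p0 p1 (?s N) x \<in> Fil R n p0 p1"
    using Hom_complete[OF o, of ?s, OF exp_psum_Hom[OF kl o u] c] by blast
  have ex: "x \<in> Hom R p0 p1 \<and> fil_converges_to R p0 p1 ?s x"
    using x unfolding fil_converges_to_def by simp
  have un: "y = x" if yc: "y \<in> Hom R p0 p1 \<and> fil_converges_to R p0 p1 ?s y" for y
  proof (rule eq_if_fil_cong[OF o _ x(1)])
    show "y \<in> Hom R p0 p1" using yc by simp
    fix n
    obtain T1 where T1: "\<forall>N\<ge>T1. hsub R p0 p1 (?s N) x \<in> Fil R n p0 p1" using x by blast
    obtain T2 where T2: "\<forall>N\<ge>T2. hsub R p0 p1 (?s N) y \<in> Fil R n p0 p1"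
      using yc unfolding fil_converges_to_def by blast
    have 1: "hsub R p0 p1 (?s (max T1 T2)) x \<in> Fil R n p0 p1" using T1 by simp
    have 2: "hsub R p0 p1 (?s (max T1 T2)) y \<in> Fil R n p0 p1" using T2 by simp
    show "hsub R p0 p1 y x \<in> Fil R n p0 p1"
      using fil_cong_trans[OF o _ exp_psum_Hom[OF kl o u] x(1) fil_cong_sym[OF o exp_psum_Hom[OF kl o u] _ 2] 1] yc
        by simp
  qed
  have "der_exp R D p0 p1 u = x" unfolding der_exp_def
    by (rule the_equality[where P="\<lambda>x. x \<in> Hom R p0 p1 \<and> fil_converges_to R p0 p1 ?s x", OF ex un])
  then show ?thesis using ex by simp
qed

lemma der_exp_Hom: "top_nilpotent D \<Longrightarrow> p0 \<in> Ob R \<Longrightarrow> p1 \<in> Ob R \<Longrightarrow> u \<in> Hom R p0 p1 \<Longrightarrow> der_exp R D p0 p1 u \<in> Hom R p0 p1"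
  using der_exp_converges by blast

lemma der_exp_approx:
  assumes g: "top_nilpotent D" and o: "p0 \<in> Ob R" "p1 \<in> Ob R"
    and T: "\<forall>k\<ge>T. \<forall>x\<in>Hom R p0 p1. (D p0 p1 ^^ k) x \<in> Fil R n p0 p1"
    and N: "N \<ge> T" and u: "u \<in> Hom R p0 p1"
  shows "hsub R p0 p1 (der_exp R D p0 p1 u) (exp_psum R D p0 p1 u N) \<in> Fil R n p0 p1"
proof -
  note kl = top_nilpotentD(1)[OF g o]
  let ?s = "exp_psum R D p0 p1 u"
  note E = der_exp_converges[OF g o u]
  obtain T1 where T1: "\<forall>M\<ge>T1. hsub R p0 p1 (?s M) (der_exp R D p0 p1 u) \<in> Fil R n p0 p1"
    using E unfolding fil_converges_to_def by blast
  let ?M = "max T1 N"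
  have 1: "hsub R p0 p1 (?s ?M) (der_exp R D p0 p1 u) \<in> Fil R n p0 p1" using T1 by simp
  have 2: "hsub R p0 p1 (?s ?M) (?s T) \<in> Fil R n p0 p1"
    using exp_psum_cauchy[OF kl o u, of T n ?M] T u N by simp
  have 3: "hsub R p0 p1 (?s N) (?s T) \<in> Fil R n p0 p1"
    using exp_psum_cauchy[OF kl o u, of T n N] T u N by simp
  have sh: "?s M \<in> Hom R p0 p1" for M using exp_psum_Hom[OF kl o u] .
  have 4: "hsub R p0 p1 (?s ?M) (?s N) \<in> Fil R n p0 p1"
    by (rule fil_cong_trans[OF o sh sh sh 2 fil_cong_sym[OF o sh sh 3]])
  show ?thesis
    by (rule fil_cong_trans[OF o E[THEN conjunct1] sh sh fil_cong_sym[OF o sh E[THEN conjunct1] 1] 4])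
qed

lemma der_exp_approx_uniform:
  assumes g: "top_nilpotent D" and o: "p0 \<in> Ob R" "p1 \<in> Ob R"
  shows "\<exists>T. \<forall>N\<ge>T. \<forall>u\<in>Hom R p0 p1.
           hsub R p0 p1 (der_exp R D p0 p1 u) (exp_psum R D p0 p1 u N) \<in> Fil R n p0 p1"
  using der_exp_approx[OF g o] top_nilpotent_funpow_eventually[OF g o] by blast

lemma der_exp_eqI:
  assumes g: "top_nilpotent D" and o: "p0 \<in> Ob R" "p1 \<in> Ob R" and u: "u \<in> Hom R p0 p1" and x: "x \<in> Hom R p0 p1"
    and h: "\<And>n. \<exists>T. \<forall>N\<ge>T. hsub R p0 p1 x (exp_psum R D p0 p1 u N) \<in> Fil R n p0 p1"
  shows "der_exp R D p0 p1 u = x"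
proof (rule eq_if_fil_cong[OF o der_exp_Hom[OF g o u] x])
  fix n
  note kl = top_nilpotentD(1)[OF g o]
  obtain T1 where T1: "\<forall>N\<ge>T1. \<forall>u\<in>Hom R p0 p1. hsub R p0 p1 (der_exp R D p0 p1 u) (exp_psum R D p0 p1 u N) \<in> Fil R n p0 p1"
    using der_exp_approx_uniform[OF g o] by blast
  obtain T2 where T2: "\<forall>N\<ge>T2. hsub R p0 p1 x (exp_psum R D p0 p1 u N) \<in> Fil R n p0 p1"
    using h by blast
  have 1: "hsub R p0 p1 (der_exp R D p0 p1 u) (exp_psum R D p0 p1 u (max T1 T2)) \<in> Fil R n p0 p1"
    using T1 u by simp
  have 2: "hsub R p0 p1 x (exp_psum R D p0 p1 u (max T1 T2)) \<in> Fil R n p0 p1" using T2 by simp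
  show "hsub R p0 p1 (der_exp R D p0 p1 u) x \<in> Fil R n p0 p1"
    by (rule fil_cong_trans[OF o der_exp_Hom[OF g o u] exp_psum_Hom[OF kl o u] x 1 fil_cong_sym[OF o x exp_psum_Hom[OF kl o u] 2]])
qed

lemma der_exp_add:
  assumes g: "top_nilpotent D" and o: "p0 \<in> Ob R" "p1 \<in> Ob R" and u: "u \<in> Hom R p0 p1" and v: "v \<in> Hom R p0 p1"
  shows "der_exp R D p0 p1 (sac.add R p0 p1 u v) = sac.add R p0 p1 (der_exp R D p0 p1 u) (der_exp R D p0 p1 v)"
proof (rule der_exp_eqI[OF g o])
  note kl = top_nilpotentD(1)[OF g o]
  show "sac.add R p0 p1 u v \<in> Hom R p0 p1" using o u v by simp
  show "sac.add R p0 p1 (der_exp R D p0 p1 u) (der_exp R D p0 p1 v) \<in> Hom R p0 p1"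
    using der_exp_Hom[OF g o] o u v by simp
  fix n
  obtain T where T: "\<forall>N\<ge>T. \<forall>u\<in>Hom R p0 p1. hsub R p0 p1 (der_exp R D p0 p1 u) (exp_psum R D p0 p1 u N) \<in> Fil R n p0 p1"
    using der_exp_approx_uniform[OF g o] by blast
  show "\<exists>T. \<forall>N\<ge>T. hsub R p0 p1 (sac.add R p0 p1 (der_exp R D p0 p1 u) (der_exp R D p0 p1 v))
          (exp_psum R D p0 p1 (sac.add R p0 p1 u v) N) \<in> Fil R n p0 p1"
    using T u v
      by (auto simp: exp_psum_add[OF kl o u v] intro!: fil_cong_add[OF o] der_exp_Hom[OF g o] exp_psum_Hom[OF kl o])
qed

lemma der_exp_sm:
  assumes g: "top_nilpotent D" and o: "p0 \<in> Ob R" "p1 \<in> Ob R" and u: "u \<in> Hom R p0 p1"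
  shows "der_exp R D p0 p1 (smult R p0 p1 a u) = smult R p0 p1 a (der_exp R D p0 p1 u)"
proof (rule der_exp_eqI[OF g o])
  note kl = top_nilpotentD(1)[OF g o]
  show "smult R p0 p1 a u \<in> Hom R p0 p1" using o u by simp
  show "smult R p0 p1 a (der_exp R D p0 p1 u) \<in> Hom R p0 p1" using der_exp_Hom[OF g o] o u by simp
  fix n
  obtain T where T: "\<forall>N\<ge>T. \<forall>u\<in>Hom R p0 p1. hsub R p0 p1 (der_exp R D p0 p1 u) (exp_psum R D p0 p1 u N) \<in> Fil R n p0 p1"
    using der_exp_approx_uniform[OF g o] by blast
  show "\<exists>T. \<forall>N\<ge>T. hsub R p0 p1 (smult R p0 p1 a (der_exp R D p0 p1 u))
          (exp_psum R D p0 p1 (smult R p0 p1 a u) N) \<in> Fil R n p0 p1"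
    using T u by (auto simp: exp_psum_sm[OF kl o u] intro!: fil_cong_sm[OF o] der_exp_Hom[OF g o] exp_psum_Hom[OF kl o])
qed

end

locale filtered_KSAC_over_Q = complete_filtered_KSAC R for R :: "('o, 'k::comm_ring_1, 'm) sac" +
  assumes KQ: "\<forall>n::nat. n > 0 \<longrightarrow> (\<exists>r::'k. of_nat n * r = 1)"
    and C2: "cond_C2 R"
begin

lemma of_nat_inv_nat: "n > 0 \<Longrightarrow> of_nat n * (inv_nat n :: 'k) = 1"
  unfolding inv_nat_def using KQ someI_ex[of "\<lambda>r::'k. of_nat n * r = 1"] by blast

lemma inv_nat_fact: "of_nat (fact n) * (inv_nat (fact n) :: 'k) = 1"
  using of_nat_inv_nat[of "fact n"] by simp

lemma inv_nat_one: "(inv_nat (Suc 0) :: 'k) = 1"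
  using of_nat_inv_nat[of 1] by simp

lemma inv_fact_binomial:
  assumes "k \<le> n"
  shows "(inv_nat (fact n) :: 'k) * of_nat (n choose k) = inv_nat (fact k) * inv_nat (fact (n - k))"
proof -
  let ?a = "of_nat (fact k) :: 'k" and ?b = "of_nat (fact (n - k)) :: 'k" and ?c = "of_nat (n choose k) :: 'k"
  let ?ia = "inv_nat (fact k) :: 'k" and ?ib = "inv_nat (fact (n - k)) :: 'k" and ?in = "inv_nat (fact n) :: 'k"
  have f: "(of_nat (fact n) :: 'k) = ?a * ?b * ?c"
    using binomial_fact_lemma[OF assms] by (metis of_nat_mult)
  have "?ia * ?ib = ?ia * ?ib * (of_nat (fact n) * ?in)" using inv_nat_fact by simp
  also have "\<dots> = (?a * ?ia) * (?b * ?ib) * ?c * ?in" unfolding f by (simp add: ac_simps)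
  also have "\<dots> = ?in * ?c" using inv_nat_fact[of k] inv_nat_fact[of "n - k"] by simp
  finally show ?thesis by simp
qed

definition exp_double_psum :: "'o \<Rightarrow> 'o \<Rightarrow> (nat \<Rightarrow> nat \<Rightarrow> 'm) \<Rightarrow> nat \<Rightarrow> 'm" where
  "exp_double_psum p0 p1 t N = finsum (hom_group R p0 p1) (\<lambda>a. finsum (hom_group R p0 p1)
     (\<lambda>b. smult R p0 p1 (inv_nat (fact a) * inv_nat (fact b)) (t a b)) {..<N}) {..<N}"

lemma exp_double_psum_Hom:
  assumes o: "p0 \<in> Ob R" "p1 \<in> Ob R" and tc: "\<And>a b. t a b \<in> Hom R p0 p1"
  shows "exp_double_psum p0 p1 t N \<in> Hom R p0 p1"
  unfolding exp_double_psum_def using tc o by (auto intro!: finsum_Hom[OF o])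

lemma exp_term_antidiagonal:
  fixes t :: "nat \<Rightarrow> nat \<Rightarrow> 'm"
  assumes kl: "is_klinear_fam R D" and o: "p0 \<in> Ob R" "p1 \<in> Ob R"
    and tc: "\<And>a b. t a b \<in> Hom R p0 p1"
    and tP: "\<And>a b. D p0 p1 (t a b) = sac.add R p0 p1 (t (Suc a) b) (t a (Suc b))"
  shows "smult R p0 p1 (inv_nat (fact m)) ((D p0 p1 ^^ m) (t 0 0))
       = finsum (hom_group R p0 p1) (\<lambda>k. smult R p0 p1 (inv_nat (fact k) * inv_nat (fact (m - k))) (t k (m - k))) {..m}"
proof -
  interpret M: kmodule "hom_group R p0 p1" "smult R p0 p1" by (rule kmodule_hom_group[OF o])
  have "(D p0 p1 ^^ m) (t 0 0) = finsum (hom_group R p0 p1) (\<lambda>k. smult R p0 p1 (of_nat (m choose k)) (t k (m - k))) {..m}"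
    by (rule M.funpow_Leibniz) (use klinearD[OF kl o] tc tP in simp_all)
  then have "smult R p0 p1 (inv_nat (fact m)) ((D p0 p1 ^^ m) (t 0 0)) =
     finsum (hom_group R p0 p1) (\<lambda>k. smult R p0 p1 (inv_nat (fact m)) (smult R p0 p1 (of_nat (m choose k)) (t k (m - k)))) {..m}"
    by (simp add: M.sm_finsum tc o Pi_def)
  also have "\<dots> = finsum (hom_group R p0 p1) (\<lambda>k. smult R p0 p1 (inv_nat (fact k) * inv_nat (fact (m - k))) (t k (m - k))) {..m}"
    by (rule M.finsum_cong') (use hom_sm_mult[OF o, symmetric] inv_fact_binomial tc o in auto)
  finally show ?thesis .
qed

text \<open>The square and the triangle of side \<open>N\<close> of the double sum differ only by terms
  with \<open>a \<ge> T\<close> or \<open>b \<ge> T\<close>.\<close>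

lemma Cauchy_product_fil_cong:
  fixes t :: "nat \<Rightarrow> nat \<Rightarrow> 'm"
  assumes kl: "is_klinear_fam R D" and o: "p0 \<in> Ob R" "p1 \<in> Ob R"
    and tc: "\<And>a b. t a b \<in> Hom R p0 p1"
    and tP: "\<And>a b. D p0 p1 (t a b) = sac.add R p0 p1 (t (Suc a) b) (t a (Suc b))"
    and tS: "\<And>a b. T \<le> a \<or> T \<le> b \<Longrightarrow> t a b \<in> Fil R n p0 p1"
    and N: "2 * T \<le> N"
  shows "hsub R p0 p1 (exp_double_psum p0 p1 t N) (exp_psum R D p0 p1 (t 0 0) N) \<in> Fil R n p0 p1"
proof -
  interpret M: kmodule "hom_group R p0 p1" "smult R p0 p1" by (rule kmodule_hom_group[OF o])
  let ?s = "\<lambda>a b. smult R p0 p1 (inv_nat (fact a) * inv_nat (fact b)) (t a b)"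
  let ?triangle = "finsum (hom_group R p0 p1) (\<lambda>m. finsum (hom_group R p0 p1) (\<lambda>k. ?s k (m - k)) {..m}) {..<N}"
  have sc: "\<And>a b. ?s a b \<in> Hom R p0 p1" using tc o by simp
  have "exp_psum R D p0 p1 (t 0 0) N = ?triangle"
    unfolding exp_psum_finsum[OF kl o tc] exp_term_antidiagonal[where t = t, OF kl o tc tP] ..
  moreover have "exp_double_psum p0 p1 t N \<ominus>\<^bsub>hom_group R p0 p1\<^esub> ?triangle \<in> Fil R n p0 p1"
    unfolding exp_double_psum_def
    by (rule M.finsum_square_minus_triangle) (use sc Fil_submodule[OF o] tS o N in simp_all)
  moreover have "?triangle \<in> Hom R p0 p1" by (intro finsum_Hom[OF o] sc)
  ultimately show ?thesis using hsub_eq_minus[OF o] by simp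
qed

lemma der_exp_Cauchy_product:
  fixes t :: "nat \<Rightarrow> nat \<Rightarrow> 'm"
  assumes g: "top_nilpotent D" and o: "p0 \<in> Ob R" "p1 \<in> Ob R"
    and tc: "\<And>a b. t a b \<in> Hom R p0 p1"
    and tP: "\<And>a b. D p0 p1 (t a b) = sac.add R p0 p1 (t (Suc a) b) (t a (Suc b))"
    and tail: "\<And>n. \<exists>T. \<forall>a b. T \<le> a \<or> T \<le> b \<longrightarrow> t a b \<in> Fil R n p0 p1"
    and x: "x \<in> Hom R p0 p1"
    and approx: "\<And>n. \<exists>N0. \<forall>N\<ge>N0. hsub R p0 p1 x (exp_double_psum p0 p1 t N) \<in> Fil R n p0 p1"
  shows "der_exp R D p0 p1 (t 0 0) = x"
proof (rule der_exp_eqI[OF g o tc x])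
  note kl = top_nilpotentD(1)[OF g o]
  fix n
  obtain T where T: "\<forall>a b. T \<le> a \<or> T \<le> b \<longrightarrow> t a b \<in> Fil R n p0 p1"
    using tail by blast
  obtain N0 where N0: "\<forall>N\<ge>N0. hsub R p0 p1 x (exp_double_psum p0 p1 t N) \<in> Fil R n p0 p1"
    using approx by blast
  have "hsub R p0 p1 x (exp_psum R D p0 p1 (t 0 0) N) \<in> Fil R n p0 p1" if N: "max N0 (2 * T) \<le> N" for N
  proof (rule fil_cong_trans[OF o x exp_double_psum_Hom[OF o tc] exp_psum_Hom[OF kl o tc]])
    show "hsub R p0 p1 x (exp_double_psum p0 p1 t N) \<in> Fil R n p0 p1" using N0 N by simp
    show "hsub R p0 p1 (exp_double_psum p0 p1 t N) (exp_psum R D p0 p1 (t 0 0) N) \<in> Fil R n p0 p1"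
      by (rule Cauchy_product_fil_cong[where t = t and T = T, OF kl o tc tP]) (use T N in auto)
  qed
  then show "\<exists>T. \<forall>N\<ge>T. hsub R p0 p1 x (exp_psum R D p0 p1 (t 0 0) N) \<in> Fil R n p0 p1"
    by blast
qed

lemma mul_exp_psum:
  assumes kl: "is_klinear_fam R D" and o: "p0 \<in> Ob R" "p1 \<in> Ob R" "p2 \<in> Ob R"
    and u: "u \<in> Hom R p0 p1" and v: "v \<in> Hom R p1 p2"
  shows "mul R p0 p1 p2 (exp_psum R D p0 p1 u N) (exp_psum R D p1 p2 v N)
       = exp_double_psum p0 p2 (\<lambda>a b. mul R p0 p1 p2 ((D p0 p1 ^^ a) u) ((D p1 p2 ^^ b) v)) N"
proof -
  interpret M3: kmodule "hom_group R p0 p2" "smult R p0 p2" by (rule kmodule_hom_group[OF o(1,3)])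
  let ?t = "\<lambda>a b. mul R p0 p1 p2 ((D p0 p1 ^^ a) u) ((D p1 p2 ^^ b) v)"
  let ?pv = "exp_psum R D p1 p2 v N"
  have tc: "?t a b \<in> Hom R p0 p2" for a b
    using funpow_Hom[OF kl o(1,2) u] funpow_Hom[OF kl o(2,3) v] o by simp
  have "mul R p0 p1 p2 (exp_psum R D p0 p1 u N) ?pv = finsum (hom_group R p0 p2) (\<lambda>a. mul R p0 p1 p2
      (smult R p0 p1 (inv_nat (fact a)) ((D p0 p1 ^^ a) u)) ?pv) {..<N}"
    unfolding exp_psum_finsum[OF kl o(1,2) u]
    by (rule mul_finsum_left[OF o exp_psum_Hom[OF kl o(2,3) v]]) (use funpow_Hom[OF kl o(1,2) u] o in auto)
  also have "\<dots> = exp_double_psum p0 p2 ?t N"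
    unfolding exp_double_psum_def
  proof (rule M3.finsum_cong')
    fix a
    show "mul R p0 p1 p2 (smult R p0 p1 (inv_nat (fact a)) ((D p0 p1 ^^ a) u)) ?pv =
       finsum (hom_group R p0 p2) (\<lambda>b. smult R p0 p2 (inv_nat (fact a) * inv_nat (fact b)) (?t a b)) {..<N}"
      unfolding exp_psum_finsum[OF kl o(2,3) v]
      apply (subst mul_finsum_right[OF o])
      apply (use funpow_Hom[OF kl o(1,2) u] funpow_Hom[OF kl o(2,3) v] o in auto)[3]
      apply (rule M3.finsum_cong')
      using funpow_Hom[OF kl o(1,2) u] funpow_Hom[OF kl o(2,3) v] o
      by (auto simp: mul_sm_left mul_sm_right hom_sm_mult[OF o(1,3)] Pi_def hom_sm_commute[OF o(1,3)])
  qed (use tc o in \<open>auto intro!: finsum_Hom[OF o(1,3)]\<close>)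
  finally show ?thesis .
qed

lemma mul_funpow_tail:
  assumes g: "top_nilpotent D" and o: "p0 \<in> Ob R" "p1 \<in> Ob R" "p2 \<in> Ob R"
    and u: "u \<in> Hom R p0 p1" and v: "v \<in> Hom R p1 p2"
  shows "\<exists>T. \<forall>a b. T \<le> a \<or> T \<le> b \<longrightarrow> mul R p0 p1 p2 ((D p0 p1 ^^ a) u) ((D p1 p2 ^^ b) v) \<in> Fil R n p0 p2"
proof -
  note kl = top_nilpotentD(1)[OF g o(1,2)]
  obtain T1 where T1: "\<forall>k\<ge>T1. \<forall>x\<in>Hom R p0 p1. (D p0 p1 ^^ k) x \<in> Fil R n p0 p1"
    using top_nilpotent_funpow_eventually[OF g o(1,2)] by blast
  obtain T2 where T2: "\<forall>k\<ge>T2. \<forall>x\<in>Hom R p1 p2. (D p1 p2 ^^ k) x \<in> Fil R n p1 p2"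
    using top_nilpotent_funpow_eventually[OF g o(2,3)] by blast
  have "mul R p0 p1 p2 ((D p0 p1 ^^ a) u) ((D p1 p2 ^^ b) v) \<in> Fil R n p0 p2"
    if "max T1 T2 \<le> a \<or> max T1 T2 \<le> b" for a b
    using that T1 T2 u v Fil_mul[OF o, of _ n _ 0] Fil_mul[OF o, of _ 0 _ n] Fil_0 o
      funpow_Hom[OF kl o(1,2) u] funpow_Hom[OF kl o(2,3) v] by fastforce
  then show ?thesis by blast
qed

lemma der_exp_mul:
  assumes g: "top_nilpotent D" and d: "is_derivation R D" and o: "p0 \<in> Ob R" "p1 \<in> Ob R" "p2 \<in> Ob R"
    and u: "u \<in> Hom R p0 p1" and v: "v \<in> Hom R p1 p2"
  shows "der_exp R D p0 p2 (mul R p0 p1 p2 u v) = mul R p0 p1 p2 (der_exp R D p0 p1 u) (der_exp R D p1 p2 v)"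
proof -
  note kl = top_nilpotentD(1)[OF g o(1,2)]
  let ?t = "\<lambda>a b. mul R p0 p1 p2 ((D p0 p1 ^^ a) u) ((D p1 p2 ^^ b) v)"
  let ?eu = "der_exp R D p0 p1 u" and ?ev = "der_exp R D p1 p2 v"
  have tc: "?t a b \<in> Hom R p0 p2" for a b
    using funpow_Hom[OF kl o(1,2) u] funpow_Hom[OF kl o(2,3) v] o by simp
  have tail: "\<exists>T. \<forall>a b. T \<le> a \<or> T \<le> b \<longrightarrow> ?t a b \<in> Fil R n p0 p2" for n
    by (rule mul_funpow_tail[OF g o u v])
  have approx: "\<exists>N0. \<forall>N\<ge>N0. hsub R p0 p2 (mul R p0 p1 p2 ?eu ?ev) (exp_double_psum p0 p2 ?t N) \<in> Fil R n p0 p2" for n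
  proof -
    obtain A1 where A1: "\<forall>N\<ge>A1. \<forall>u\<in>Hom R p0 p1. hsub R p0 p1 (der_exp R D p0 p1 u) (exp_psum R D p0 p1 u N) \<in> Fil R n p0 p1"
      using der_exp_approx_uniform[OF g o(1,2)] by blast
    obtain A2 where A2: "\<forall>N\<ge>A2. \<forall>u\<in>Hom R p1 p2. hsub R p1 p2 (der_exp R D p1 p2 u) (exp_psum R D p1 p2 u N) \<in> Fil R n p1 p2"
      using der_exp_approx_uniform[OF g o(2,3)] by blast
    have "hsub R p0 p2 (mul R p0 p1 p2 ?eu ?ev) (exp_double_psum p0 p2 ?t N) \<in> Fil R n p0 p2" if "max A1 A2 \<le> N" for N
      unfolding mul_exp_psum[OF kl o u v, symmetric]
      by (rule fil_cong_mul[OF o der_exp_Hom[OF g o(1,2) u] exp_psum_Hom[OF kl o(1,2) u]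
            der_exp_Hom[OF g o(2,3) v] exp_psum_Hom[OF kl o(2,3) v]])
         (use A1 A2 that u v in auto)
    then show ?thesis by blast
  qed
  have "der_exp R D p0 p2 (?t 0 0) = mul R p0 p1 p2 ?eu ?ev"
  proof (rule der_exp_Cauchy_product[OF g o(1,3) tc _ tail _ approx])
    show "D p0 p2 (?t a b) = sac.add R p0 p2 (?t (Suc a) b) (?t a (Suc b))" for a b
      using derivationD[OF d o] funpow_Hom[OF kl o(1,2) u] funpow_Hom[OF kl o(2,3) v] by simp
    show "mul R p0 p1 p2 ?eu ?ev \<in> Hom R p0 p2"
      using der_exp_Hom[OF g o(1,2) u] der_exp_Hom[OF g o(2,3) v] o by simp
  qed
  then show ?thesis by simp
qed

lemma C2_decomposition: "q \<in> Ob R \<Longrightarrow> n \<ge> 1 \<Longrightarrow> x \<in> Fil R n q q \<Longrightarrow>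
  \<exists>s\<in>finsums R q q {lprod R q us | us. length us = n \<and> set us \<subseteq> Fil R 1 q q}.
     \<exists>y\<in>Fil R (n + 1) q q. x = sac.add R q q s y"
  using C2 unfolding cond_C2_def by simp

lemma gr_nilpotent_endo:
  assumes c: "cond_i_iii R D" and q: "q \<in> Ob R" and l: "l \<ge> 1"
  shows "gr_nilpotent D q q l"
proof -
  note d = cond_i_iiiD(1)[OF c] and kl = cond_i_iiiD(2)[OF c] and F = cond_i_iiiD(3)[OF c]
  obtain \<nu> where nu: "\<forall>u\<in>Fil R 1 q q. (D q q ^^ \<nu>) u \<in> Fil R 2 q q"
    using cond_i_iiiD(4)[OF c q q] by blast
  let ?S = "{lprod R q us | us. length us = l \<and> set us \<subseteq> Fil R 1 q q}"
  have S: "?S \<subseteq> Hom R q q"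
  proof
    fix s assume "s \<in> ?S"
    then obtain us where us: "s = lprod R q us" "length us = l" "set us \<subseteq> Fil R 1 q q" by blast
    then have "us \<noteq> []" using l by auto
    then have "lprod R q us \<in> Fil R l q q" using lprod_Fil[OF q _ us(3)] us(2) by simp
    then show "s \<in> Hom R q q" using Fil_in_Hom[OF q q] us(1) by simp
  qed
  have hS: "(D q q ^^ (l * \<nu>)) s \<in> Fil R (Suc l) q q" if "s \<in> ?S" for s
  proof -
    obtain us where us: "s = lprod R q us" "length us = l" "set us \<subseteq> Fil R 1 q q"
      using \<open>s \<in> ?S\<close> by blast
    then have "us \<noteq> []" using l by auto
    then show ?thesis using lprod_gr_nilpotent[OF d F q nu, of us] us by simp
  qed
  have "(D q q ^^ (l * \<nu>)) x \<in> Fil R (Suc l) q q" if x: "x \<in> Fil R l q q" for x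
  proof -
    obtain s y where sy: "s \<in> finsums R q q ?S" "y \<in> Fil R (l + 1) q q" "x = sac.add R q q s y"
      using C2_decomposition[OF q l x] by blast
    have 1: "(D q q ^^ (l * \<nu>)) s \<in> Fil R (Suc l) q q"
      by (rule finsums_funpow_Fil[OF kl q S hS sy(1)])
    have 2: "(D q q ^^ (l * \<nu>)) y \<in> Fil R (Suc l) q q"
      using funpow_Fil[of "Suc l" q q D, OF F[OF q q]] sy(2) by simp
    have "s \<in> Hom R q q" using finsums_Hom[OF q S sy(1)] .
    moreover have "y \<in> Hom R q q" using Fil_in_Hom[OF q q sy(2)] .
    ultimately show ?thesis using sy(3) klinear_funpow_add[OF kl q q] 1 2 q by simp
  qed
  then show ?thesis unfolding gr_nilpotent_def by blast
qed

lemma gr_nilpotent_Hom: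
  assumes c: "cond_i_iii R D" and o: "p0 \<in> Ob R" "p1 \<in> Ob R"
  shows "gr_nilpotent D p0 p1 l"
proof -
  note d = cond_i_iiiD(1)[OF c] and kl = cond_i_iiiD(2)[OF c] and F = cond_i_iiiD(3)[OF c]
  have n0: "\<forall>x\<in>Fil R 0 p0 p1. (D p0 p1 ^^ 1) x \<in> Fil R (Suc 0) p0 p1"
    using cond_i_iiiD(5)[OF c o] Fil_0[OF o] by simp
  show ?thesis
  proof (cases "l = 0")
    case True then show ?thesis using n0 unfolding gr_nilpotent_def by blast
  next
    case False
    show ?thesis using Hom_trivial_or_iso[OF o]
    proof
      assume H: "Hom R p0 p1 = {zer R p0 p1}"
      have "\<forall>x\<in>Fil R l p0 p1. (D p0 p1 ^^ 0) x \<in> Fil R (Suc l) p0 p1"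
      proof
        fix x assume "x \<in> Fil R l p0 p1"
        then have "x = zer R p0 p1" using Fil_in_Hom[OF o] H by blast
        then show "(D p0 p1 ^^ 0) x \<in> Fil R (Suc l) p0 p1" using o by simp
      qed
      then show ?thesis unfolding gr_nilpotent_def by blast
    next
      assume "\<exists>u v. u \<in> Hom R p0 p1 \<and> v \<in> Hom R p1 p0 \<and> mul R p0 p1 p0 u v = idm R p0 \<and> mul R p1 p0 p1 v u = idm R p1"
      then obtain u v where uv: "u \<in> Hom R p0 p1" "v \<in> Hom R p1 p0" "mul R p0 p1 p0 u v = idm R p0"
        by blast
      obtain B where B: "\<forall>w\<in>Fil R l p1 p1. (D p1 p1 ^^ B) w \<in> Fil R (Suc l) p1 p1"
        using gr_nilpotent_endo[OF c o(2)] False unfolding gr_nilpotent_def by fastforce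
      have "(D p0 p1 ^^ (1 + B)) x \<in> Fil R (Suc l) p0 p1" if x: "x \<in> Fil R l p0 p1" for x
      proof -
        have w: "mul R p1 p0 p1 v x \<in> Fil R l p1 p1"
          using Fil_mul[OF o(2) o(1) o(2), of v 0 x l] Fil_0[OF o(2) o(1)] uv x by simp
        have u0: "u \<in> Fil R 0 p0 p1" using Fil_0[OF o] uv by simp
        have hu: "(D p0 p1 ^^ 1) u \<in> Fil R (Suc 0) p0 p1" using n0 u0 by blast
        have "(D p0 p1 ^^ (1 + B)) (mul R p0 p1 p1 u (mul R p1 p0 p1 v x)) \<in> Fil R (Suc (0 + l)) p0 p1"
          by (rule gr_nilpotent_mul[OF d F o(1) o(2) o(2) u0 w hu B[rule_format, OF w]])
        then show ?thesis using iso_factor[OF o uv Fil_in_Hom[OF o x]] by simp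
      qed
      then show ?thesis unfolding gr_nilpotent_def by blast
    qed
  qed
qed

lemma cond_i_iii_top_nilpotent:
  assumes c: "cond_i_iii R D"
  shows "top_nilpotent D"
proof -
  note kl = cond_i_iiiD(2)[OF c] and F = cond_i_iiiD(3)[OF c]
  have "\<exists>T. \<forall>x\<in>Hom R p0 p1. (D p0 p1 ^^ T) x \<in> Fil R n p0 p1" if o: "p0 \<in> Ob R" "p1 \<in> Ob R" for p0 p1 n
  proof (induction n)
    case 0 then show ?case using Fil_0[OF o] funpow_Hom[OF kl o] by auto
  next
    case (Suc n)
    then obtain T where T: "\<forall>x\<in>Hom R p0 p1. (D p0 p1 ^^ T) x \<in> Fil R n p0 p1" by blast
    obtain N where N: "\<forall>x\<in>Fil R n p0 p1. (D p0 p1 ^^ N) x \<in> Fil R (Suc n) p0 p1"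
      using gr_nilpotent_Hom[OF c o] unfolding gr_nilpotent_def by blast
    have "(D p0 p1 ^^ (N + T)) x \<in> Fil R (Suc n) p0 p1" if "x \<in> Hom R p0 p1" for x
      using T N that by (simp add: funpow_add)
    then show ?case by blast
  qed
  then show ?thesis unfolding top_nilpotent_def using kl F by blast
qed

lemma der_exp_kernel:
  assumes g: "top_nilpotent D" and o: "p0 \<in> Ob R" "p1 \<in> Ob R" and u: "u \<in> Hom R p0 p1"
    and z: "D p0 p1 u = zer R p0 p1"
  shows "der_exp R D p0 p1 u = u"
proof (rule der_exp_eqI[OF g o u u])
  note kl = top_nilpotentD(1)[OF g o]
  have "(D p0 p1 ^^ Suc k) u = zer R p0 p1" for k
    by (induction k) (simp_all add: z klinear_zer[OF kl o])
  then have ps: "exp_psum R D p0 p1 u (Suc N) = u" for N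
    by (induction N) (simp_all add: inv_nat_one hom_zer_add[OF o] hom_sm_one[OF o] hom_sm_zer[OF o]
        hom_add_zer[OF o] u)
  fix n
  have "hsub R p0 p1 u (exp_psum R D p0 p1 u N) \<in> Fil R n p0 p1" if "1 \<le> N" for N
    using that ps[of "N - 1"] fil_cong_refl[OF o u] by simp
  then show "\<exists>T. \<forall>N\<ge>T. hsub R p0 p1 u (exp_psum R D p0 p1 u N) \<in> Fil R n p0 p1"
    by blast
qed

lemma der_exp_idm:
  assumes g: "top_nilpotent D" and d: "is_derivation R D" and p: "p \<in> Ob R"
  shows "der_exp R D p p (idm R p) = idm R p"
  using der_exp_kernel[OF g p p idm_closed[OF p] derivation_idm[OF d p]] .

lemma exp_psum_exp_psum:
  assumes kl: "is_klinear_fam R D" and kl': "is_klinear_fam R D'" and o: "p0 \<in> Ob R" "p1 \<in> Ob R"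
    and u: "u \<in> Hom R p0 p1"
  shows "exp_psum R D p0 p1 (exp_psum R D' p0 p1 u N) N
       = exp_double_psum p0 p1 (\<lambda>a b. (D p0 p1 ^^ a) ((D' p0 p1 ^^ b) u)) N"
proof -
  interpret M: kmodule "hom_group R p0 p1" "smult R p0 p1" by (rule kmodule_hom_group[OF o])
  let ?t = "\<lambda>a b. (D p0 p1 ^^ a) ((D' p0 p1 ^^ b) u)"
  let ?p' = "exp_psum R D' p0 p1 u N"
  have p'h: "?p' \<in> Hom R p0 p1" using exp_psum_Hom[OF kl' o u] .
  have tc: "?t a b \<in> Hom R p0 p1" for a b using funpow_Hom[OF kl o] funpow_Hom[OF kl' o] u by simp
  show ?thesis
    unfolding exp_psum_finsum[OF kl o p'h] exp_double_psum_def
  proof (rule M.finsum_cong')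
    fix a
    show "smult R p0 p1 (inv_nat (fact a)) ((D p0 p1 ^^ a) ?p') = finsum (hom_group R p0 p1) (\<lambda>b.
       smult R p0 p1 (inv_nat (fact a) * inv_nat (fact b)) (?t a b)) {..<N}"
      unfolding exp_psum_finsum[OF kl' o u]
      apply (subst klinear_funpow_finsum[OF kl o])
        apply (use funpow_Hom[OF kl' o u] o in simp_all)[2]
      apply (subst M.sm_finsum)
        apply (use funpow_Hom[OF kl o] funpow_Hom[OF kl' o u] o in auto)[2]
      apply (rule M.finsum_cong')
      using funpow_Hom[OF kl o] funpow_Hom[OF kl' o u] o
      by (auto simp: klinear_funpow_sm[OF kl o] hom_sm_mult[OF o] Pi_def)
  qed (use tc o in \<open>auto intro!: finsum_Hom[OF o]\<close>)
qed

lemma funpow_funpow_tail: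
  assumes g: "top_nilpotent D" and g': "top_nilpotent D'" and o: "p0 \<in> Ob R" "p1 \<in> Ob R" and u: "u \<in> Hom R p0 p1"
  shows "\<exists>T. \<forall>a b. T \<le> a \<or> T \<le> b \<longrightarrow> (D p0 p1 ^^ a) ((D' p0 p1 ^^ b) u) \<in> Fil R n p0 p1"
proof -
  obtain T1 where T1: "\<forall>k\<ge>T1. \<forall>x\<in>Hom R p0 p1. (D p0 p1 ^^ k) x \<in> Fil R n p0 p1"
    using top_nilpotent_funpow_eventually[OF g o] by blast
  obtain T2 where T2: "\<forall>k\<ge>T2. \<forall>x\<in>Hom R p0 p1. (D' p0 p1 ^^ k) x \<in> Fil R n p0 p1"
    using top_nilpotent_funpow_eventually[OF g' o] by blast
  have "(D p0 p1 ^^ a) ((D' p0 p1 ^^ b) u) \<in> Fil R n p0 p1" if "max T1 T2 \<le> a \<or> max T1 T2 \<le> b" for a b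
    using that T1 T2 u funpow_Hom[OF top_nilpotentD(1)[OF g' o] o u] top_nilpotent_funpow_Fil[OF g o]
      by fastforce
  then show ?thesis by blast
qed

lemma der_exp_der_add:
  assumes c1: "cond_i_iii R D" and c2: "cond_i_iii R D'" and c: "der_commute R D D'"
    and o: "p0 \<in> Ob R" "p1 \<in> Ob R" and u: "u \<in> Hom R p0 p1"
  shows "der_exp R (der_add R D D') p0 p1 u = der_exp R D p0 p1 (der_exp R D' p0 p1 u)"
proof -
  note kl = cond_i_iiiD(2)[OF c1] and kl' = cond_i_iiiD(2)[OF c2]
  note g = cond_i_iii_top_nilpotent[OF c1] and g' = cond_i_iii_top_nilpotent[OF c2]
  let ?t = "\<lambda>a b. (D p0 p1 ^^ a) ((D' p0 p1 ^^ b) u)"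
  let ?x = "der_exp R D p0 p1 (der_exp R D' p0 p1 u)"
  have tc: "?t a b \<in> Hom R p0 p1" for a b using funpow_Hom[OF kl o] funpow_Hom[OF kl' o] u by simp
  have Ex'u: "der_exp R D' p0 p1 u \<in> Hom R p0 p1" using der_exp_Hom[OF g' o u] .
  have tail: "\<exists>T. \<forall>a b. T \<le> a \<or> T \<le> b \<longrightarrow> ?t a b \<in> Fil R n p0 p1" for n
    by (rule funpow_funpow_tail[OF g g' o u])
  have approx: "\<exists>N0. \<forall>N\<ge>N0. hsub R p0 p1 ?x (exp_double_psum p0 p1 ?t N) \<in> Fil R n p0 p1" for n
  proof -
    obtain A1 where A1: "\<forall>N\<ge>A1. \<forall>u\<in>Hom R p0 p1. hsub R p0 p1 (der_exp R D p0 p1 u) (exp_psum R D p0 p1 u N) \<in> Fil R n p0 p1"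
      using der_exp_approx_uniform[OF g o] by blast
    obtain A2 where A2: "\<forall>N\<ge>A2. \<forall>u\<in>Hom R p0 p1. hsub R p0 p1 (der_exp R D' p0 p1 u) (exp_psum R D' p0 p1 u N) \<in> Fil R n p0 p1"
      using der_exp_approx_uniform[OF g' o] by blast
    have "hsub R p0 p1 ?x (exp_double_psum p0 p1 ?t N) \<in> Fil R n p0 p1" if N: "max A1 A2 \<le> N" for N
      unfolding exp_psum_exp_psum[OF kl kl' o u, symmetric]
    proof (rule fil_cong_trans[OF o der_exp_Hom[OF g o Ex'u] exp_psum_Hom[OF kl o Ex'u]])
      show "hsub R p0 p1 ?x (exp_psum R D p0 p1 (der_exp R D' p0 p1 u) N) \<in> Fil R n p0 p1"
        using A1 N Ex'u by simp
      show "hsub R p0 p1 (exp_psum R D p0 p1 (der_exp R D' p0 p1 u) N)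
          (exp_psum R D p0 p1 (exp_psum R D' p0 p1 u N) N) \<in> Fil R n p0 p1"
        by (rule exp_psum_fil_cong[OF g o Ex'u exp_psum_Hom[OF kl' o u]]) (use A2 N u in simp)
    qed (use exp_psum_Hom[OF kl o exp_psum_Hom[OF kl' o u]] in simp)
    then show ?thesis by blast
  qed
  have "der_exp R (der_add R D D') p0 p1 (?t 0 0) = ?x"
  proof (rule der_exp_Cauchy_product[OF cond_i_iii_top_nilpotent[OF der_add_cond_i_iii[OF c1 c2 c]] o tc _ tail _ approx])
    show "der_add R D D' p0 p1 (?t a b) = sac.add R p0 p1 (?t (Suc a) b) (?t a (Suc b))" for a b
      unfolding der_add_def using commute_funpow[OF kl c o] funpow_Hom[OF kl' o] u by simp
    show "?x \<in> Hom R p0 p1" using der_exp_Hom[OF g o Ex'u] .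
  qed
  then show ?thesis by simp
qed

lemma der_exp_scale_add:
  assumes c: "cond_i_iii R D" and o: "p0 \<in> Ob R" "p1 \<in> Ob R" and u: "u \<in> Hom R p0 p1"
  shows "der_exp R (der_scale (a + b) D) p0 p1 u = der_exp R (der_scale a D) p0 p1 (der_exp R (der_scale b D) p0 p1 u)"
proof -
  note kl = cond_i_iiiD(2)[OF c]
  have "der_exp R (der_scale (a + b) D) p0 p1 u = der_exp R (der_add R (der_scale a D) (der_scale b D)) p0 p1 u"
    by (rule der_exp_cong[OF der_add_klinear[OF der_scale_klinear[OF kl] der_scale_klinear[OF kl]] o _ u])
       (simp add: der_add_def der_scale_def hom_sm_add_left[OF o] klinearD(1)[OF kl o])
  also have "\<dots> = der_exp R (der_scale a D) p0 p1 (der_exp R (der_scale b D) p0 p1 u)"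
    by (rule der_exp_der_add[OF der_scale_cond_i_iii[OF c] der_scale_cond_i_iii[OF c] der_scale_commute[OF kl] o u])
  finally show ?thesis .
qed

lemma der_exp_scale_one:
  assumes c: "cond_i_iii R D" and o: "p0 \<in> Ob R" "p1 \<in> Ob R" and u: "u \<in> Hom R p0 p1"
  shows "der_exp R (der_scale 1 D) p0 p1 u = der_exp R D p0 p1 u"
  by (rule der_exp_cong[OF cond_i_iiiD(2)[OF c] o _ u])
     (simp add: der_scale_def hom_sm_one[OF o] klinearD(1)[OF cond_i_iiiD(2)[OF c] o])

lemma der_exp_scale_zero:
  assumes c: "cond_i_iii R D" and o: "p0 \<in> Ob R" "p1 \<in> Ob R" and u: "u \<in> Hom R p0 p1"
  shows "der_exp R (der_scale 0 D) p0 p1 u = u"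
  by (rule der_exp_kernel[OF cond_i_iii_top_nilpotent[OF der_scale_cond_i_iii[OF c]] o u])
     (simp add: der_scale_def hom_sm_zero[OF o] klinearD(1)[OF cond_i_iiiD(2)[OF c] o u])

lemma der_exp_scale_minus_one:
  assumes c: "cond_i_iii R D" and o: "p0 \<in> Ob R" "p1 \<in> Ob R" and u: "u \<in> Hom R p0 p1"
  shows "der_exp R (der_scale (-1) D) p0 p1 (der_exp R D p0 p1 u) = u"
    "der_exp R D p0 p1 (der_exp R (der_scale (-1) D) p0 p1 u) = u"
proof -
  note g = cond_i_iii_top_nilpotent[OF c] and gm = cond_i_iii_top_nilpotent[OF der_scale_cond_i_iii[OF c]]
  have "u = der_exp R (der_scale (-1 + 1) D) p0 p1 u" using der_exp_scale_zero[OF c o u] by simp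
  also have "\<dots> = der_exp R (der_scale (-1) D) p0 p1 (der_exp R (der_scale 1 D) p0 p1 u)"
    by (rule der_exp_scale_add[OF c o u])
  finally show "der_exp R (der_scale (-1) D) p0 p1 (der_exp R D p0 p1 u) = u"
    using der_exp_scale_one[OF c o u] by simp
  have "u = der_exp R (der_scale (1 + -1) D) p0 p1 u" using der_exp_scale_zero[OF c o u] by simp
  also have "\<dots> = der_exp R (der_scale 1 D) p0 p1 (der_exp R (der_scale (-1) D) p0 p1 u)"
    by (rule der_exp_scale_add[OF c o u])
  finally show "der_exp R D p0 p1 (der_exp R (der_scale (-1) D) p0 p1 u) = u"
    using der_exp_scale_one[OF c o der_exp_Hom[OF gm[of "-1"] o u]] by simp
qed

lemma der_exp_Aut: assumes c: "cond_i_iii R D" shows "is_Aut R (der_exp R D)"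
proof -
  note g = cond_i_iii_top_nilpotent[OF c] and gm = cond_i_iii_top_nilpotent[OF der_scale_cond_i_iii[OF c, of "-1"]]
  have kl: "is_klinear_fam R (der_exp R D)"
    unfolding is_klinear_fam_def using der_exp_Hom[OF g] der_exp_add[OF g] der_exp_sm[OF g] by simp
  have bij: "bij_betw (der_exp R D p0 p1) (Hom R p0 p1) (Hom R p0 p1)" if o: "p0 \<in> Ob R" "p1 \<in> Ob R" for p0 p1
    by (rule bij_betwI[where g = "der_exp R (der_scale (-1) D) p0 p1"])
       (use der_exp_Hom[OF g o] der_exp_Hom[OF gm o] der_exp_scale_minus_one[OF c o] in auto)
  show ?thesis unfolding is_Aut_def
    using kl bij der_exp_mul[OF g cond_i_iiiD(1)[OF c]] der_exp_idm[OF g cond_i_iiiD(1)[OF c]] by simp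
qed

lemma der_exp_scale_of_nat:
  assumes c: "cond_i_iii R D" and o: "p0 \<in> Ob R" "p1 \<in> Ob R" and u: "u \<in> Hom R p0 p1"
  shows "der_exp R (der_scale (of_nat m) D) p0 p1 u = (der_exp R D p0 p1 ^^ m) u"
proof (induction m)
  case 0 then show ?case using der_exp_scale_zero[OF c o u] by simp
next
  case (Suc m)
  note g = cond_i_iii_top_nilpotent[OF c]
  have h: "(der_exp R D p0 p1 ^^ m) u \<in> Hom R p0 p1"
    by (induction m) (simp_all add: u der_exp_Hom[OF g o])
  have "der_exp R (der_scale (of_nat (Suc m)) D) p0 p1 u = der_exp R (der_scale (1 + of_nat m) D) p0 p1 u"
    by simp
  also have "\<dots> = der_exp R (der_scale 1 D) p0 p1 (der_exp R (der_scale (of_nat m) D) p0 p1 u)"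
    by (rule der_exp_scale_add[OF c o u])
  also have "\<dots> = der_exp R D p0 p1 ((der_exp R D p0 p1 ^^ m) u)"
    using Suc der_exp_scale_one[OF c o h] by simp
  finally show ?case by simp
qed

lemma der_exp_scale_approx:
  assumes c: "cond_i_iii R D" and o: "p0 \<in> Ob R" "p1 \<in> Ob R"
    and T: "\<forall>k\<ge>T. \<forall>x\<in>Hom R p0 p1. (D p0 p1 ^^ k) x \<in> Fil R n p0 p1"
    and N: "N \<ge> T" and u: "u \<in> Hom R p0 p1"
  shows "hsub R p0 p1 (der_exp R (der_scale a D) p0 p1 u) (exp_psum R (der_scale a D) p0 p1 u N) \<in> Fil R n p0 p1"
proof (rule der_exp_approx[OF cond_i_iii_top_nilpotent[OF der_scale_cond_i_iii[OF c]] o _ N u])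
  show "\<forall>k\<ge>T. \<forall>x\<in>Hom R p0 p1. (der_scale a D p0 p1 ^^ k) x \<in> Fil R n p0 p1"
    using T der_scale_funpow[OF cond_i_iiiD(2)[OF c] o] o by simp
qed

lemma exp_psum_der_scale_hsub:
  assumes kl: "is_klinear_fam R D" and kl': "is_klinear_fam R D'" and o: "p0 \<in> Ob R" "p1 \<in> Ob R"
    and u: "u \<in> Hom R p0 p1"
  shows "hsub R p0 p1 (exp_psum R (der_scale c D) p0 p1 u N) (exp_psum R (der_scale c D') p0 p1 u N)
       = finsum (hom_group R p0 p1) (\<lambda>k. smult R p0 p1 (c ^ k) (hsub R p0 p1
           (smult R p0 p1 (inv_nat (fact k)) ((D p0 p1 ^^ k) u))
           (smult R p0 p1 (inv_nat (fact k)) ((D' p0 p1 ^^ k) u)))) {..<N}"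
proof -
  interpret M: kmodule "hom_group R p0 p1" "smult R p0 p1" by (rule kmodule_hom_group[OF o])
  let ?x = "\<lambda>k. smult R p0 p1 (inv_nat (fact k)) ((D p0 p1 ^^ k) u)"
  let ?y = "\<lambda>k. smult R p0 p1 (inv_nat (fact k)) ((D' p0 p1 ^^ k) u)"
  let ?b = "\<lambda>k. hsub R p0 p1 (?x k) (?y k)"
  have xh: "?x k \<in> Hom R p0 p1" "?y k \<in> Hom R p0 p1" "?b k \<in> Hom R p0 p1" for k
    using funpow_Hom[OF kl o u] funpow_Hom[OF kl' o u] o by simp_all
  have s1: "exp_psum R (der_scale c D) p0 p1 u N = finsum (hom_group R p0 p1) (\<lambda>k. smult R p0 p1 (c ^ k) (?x k)) {..<N}"
    unfolding exp_psum_finsum[OF der_scale_klinear[OF kl] o u]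
    by (rule M.finsum_cong') (use der_scale_funpow[OF kl o u] hom_sm_commute[OF o] funpow_Hom[OF kl o u] o in auto)
  have s2: "exp_psum R (der_scale c D') p0 p1 u N = finsum (hom_group R p0 p1) (\<lambda>k. smult R p0 p1 (c ^ k) (?y k)) {..<N}"
    unfolding exp_psum_finsum[OF der_scale_klinear[OF kl'] o u]
    by (rule M.finsum_cong') (use der_scale_funpow[OF kl' o u] hom_sm_commute[OF o] funpow_Hom[OF kl' o u] o in auto)
  have "finsum (hom_group R p0 p1) (\<lambda>k. smult R p0 p1 (c ^ k) (?b k)) {..<N}
     = finsum (hom_group R p0 p1) (\<lambda>k. sac.add R p0 p1 (smult R p0 p1 (c ^ k) (?x k)) (smult R p0 p1 (-1) (smult R p0 p1 (c ^ k) (?y k)))) {..<N}"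
    by (rule M.finsum_cong') (use xh o in \<open>auto simp: hsub_def hom_sm_add_right[OF o] hom_sm_commute[OF o]\<close>)
  also have "\<dots> = sac.add R p0 p1 (finsum (hom_group R p0 p1) (\<lambda>k. smult R p0 p1 (c ^ k) (?x k)) {..<N})
       (finsum (hom_group R p0 p1) (\<lambda>k. smult R p0 p1 (-1) (smult R p0 p1 (c ^ k) (?y k))) {..<N})"
    using M.finsum_addf[of "\<lambda>k. smult R p0 p1 (c ^ k) (?x k)" "{..<N}" "\<lambda>k. smult R p0 p1 (-1) (smult R p0 p1 (c ^ k) (?y k))"]
      xh o by (simp add: Pi_def)
  also have "finsum (hom_group R p0 p1) (\<lambda>k. smult R p0 p1 (-1) (smult R p0 p1 (c ^ k) (?y k))) {..<N}
       = smult R p0 p1 (-1) (finsum (hom_group R p0 p1) (\<lambda>k. smult R p0 p1 (c ^ k) (?y k)) {..<N})"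
    using M.sm_finsum[of "{..<N}" "\<lambda>k. smult R p0 p1 (c ^ k) (?y k)" "-1"] xh o by (simp add: Pi_def)
  finally show ?thesis
    unfolding s1 s2 hsub_def by simp
qed

lemma der_exp_scale_of_nat_eq:
  assumes c: "cond_i_iii R D" and c': "cond_i_iii R D'"
    and e: "\<forall>p0\<in>Ob R. \<forall>p1\<in>Ob R. \<forall>u\<in>Hom R p0 p1. der_exp R D p0 p1 u = der_exp R D' p0 p1 u"
    and o: "p0 \<in> Ob R" "p1 \<in> Ob R" and u: "u \<in> Hom R p0 p1"
  shows "der_exp R (der_scale (of_nat m) D) p0 p1 u = der_exp R (der_scale (of_nat m) D') p0 p1 u"
proof -
  have "(der_exp R D p0 p1 ^^ m) u = (der_exp R D' p0 p1 ^^ m) u \<and> (der_exp R D p0 p1 ^^ m) u \<in> Hom R p0 p1"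
    by (induction m) (use u e o der_exp_Hom[OF cond_i_iii_top_nilpotent[OF c] o] in auto)
  then show ?thesis using der_exp_scale_of_nat[OF c o u] der_exp_scale_of_nat[OF c' o u] by simp
qed

lemma der_exp_injective:
  assumes c: "cond_i_iii R D" and c': "cond_i_iii R D'"
    and e: "\<forall>p0\<in>Ob R. \<forall>p1\<in>Ob R. \<forall>u\<in>Hom R p0 p1. der_exp R D p0 p1 u = der_exp R D' p0 p1 u"
    and o: "p0 \<in> Ob R" "p1 \<in> Ob R" and u: "u \<in> Hom R p0 p1"
  shows "D p0 p1 u = D' p0 p1 u"
proof -
  interpret M: kmodule "hom_group R p0 p1" "smult R p0 p1" by (rule kmodule_hom_group[OF o])
  note kl = cond_i_iiiD(2)[OF c] and kl' = cond_i_iiiD(2)[OF c']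
  note g = cond_i_iii_top_nilpotent[OF c] and g' = cond_i_iii_top_nilpotent[OF c']
  have em: "der_exp R (der_scale (of_nat m) D) p0 p1 u = der_exp R (der_scale (of_nat m) D') p0 p1 u" for m
    using der_exp_scale_of_nat_eq[OF c c' e o u] .
  show ?thesis
  proof (rule eq_if_fil_cong[OF o klinearD(1)[OF kl o u] klinearD(1)[OF kl' o u]])
    fix n
    obtain T1 where T1: "\<forall>k\<ge>T1. \<forall>x\<in>Hom R p0 p1. (D p0 p1 ^^ k) x \<in> Fil R n p0 p1"
      using top_nilpotent_funpow_eventually[OF g o] by blast
    obtain T2 where T2: "\<forall>k\<ge>T2. \<forall>x\<in>Hom R p0 p1. (D' p0 p1 ^^ k) x \<in> Fil R n p0 p1"
      using top_nilpotent_funpow_eventually[OF g' o] by blast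
    define N where "N = max (max T1 T2) 2"
    let ?x = "\<lambda>k. smult R p0 p1 (inv_nat (fact k)) ((D p0 p1 ^^ k) u)"
    let ?y = "\<lambda>k. smult R p0 p1 (inv_nat (fact k)) ((D' p0 p1 ^^ k) u)"
    let ?b = "\<lambda>k. hsub R p0 p1 (?x k) (?y k)"
    have bh: "?b k \<in> Hom R p0 p1" for k
      using funpow_Hom[OF kl o u] funpow_Hom[OF kl' o u] o by simp
    text \<open>\<open>N\<close> must not depend on \<open>m\<close>: the bound in \<open>der_exp_scale_approx\<close> is
      uniform in the scale.\<close>
    have P: "finsum (hom_group R p0 p1) (\<lambda>k. smult R p0 p1 ((of_nat m) ^ k) (?b k)) {..<N} \<in> Fil R n p0 p1" for m :: nat
    proof -
      let ?c = "of_nat m :: 'k"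
      have eh: "der_exp R (der_scale ?c D) p0 p1 u \<in> Hom R p0 p1"
        using der_exp_Hom[OF cond_i_iii_top_nilpotent[OF der_scale_cond_i_iii[OF c]] o u] .
      have "hsub R p0 p1 (exp_psum R (der_scale ?c D) p0 p1 u N) (exp_psum R (der_scale ?c D') p0 p1 u N) \<in> Fil R n p0 p1"
        using fil_cong_trans[OF o _ eh, OF _ _ fil_cong_sym[OF o eh]]
          der_exp_scale_approx[OF c o T1 _ u, of N ?c] der_exp_scale_approx[OF c' o T2 _ u, of N ?c]
          exp_psum_Hom[OF der_scale_klinear[OF kl] o u] exp_psum_Hom[OF der_scale_klinear[OF kl'] o u] em
        by (simp add: N_def)
      then show ?thesis unfolding exp_psum_der_scale_hsub[OF kl kl' o u] .
    qed
    have "?b 1 \<in> Fil R n p0 p1"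
    proof (rule M.coefficients_in_submodule[OF KQ Fil_submodule[OF o], where b = ?b and N = N and k = 1])
      show "\<And>k. ?b k \<in> carrier (hom_group R p0 p1)" using bh by simp
      show "\<And>m. finsum (hom_group R p0 p1) (\<lambda>k. smult R p0 p1 (of_nat m ^ k) (?b k)) {..<N} \<in> Fil R n p0 p1"
        by (rule P)
      show "1 < N" by (simp add: N_def)
    qed
    then show "hsub R p0 p1 (D p0 p1 u) (D' p0 p1 u) \<in> Fil R n p0 p1"
      using inv_nat_one hom_sm_one[OF o] klinearD(1)[OF kl o u] klinearD(1)[OF kl' o u] by simp
  qed
qed

end

theorem proposition1p3p3:
  fixes R :: "('o, 'k::comm_ring_1, 'm) sac"
    and D D' :: "('o, 'm) famap"
  assumes KQ: "\<forall>n::nat. n > 0 \<longrightarrow> (\<exists>r::'k. of_nat n * r = 1)"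
    and ksac: "is_KSAC R" and filt: "is_filtered R"
    and C2: "cond_C2 R" and C3: "cond_C3 R"
    and D: "cond_i_iii R D" and D': "cond_i_iii R D'"
  shows "(der_commute R D D' \<longrightarrow>
            cond_i_iii R (der_add R D D') \<and>
            (\<forall>p0\<in>Ob R. \<forall>p1\<in>Ob R. \<forall>u\<in>Hom R p0 p1.
               der_exp R (der_add R D D') p0 p1 u
                 = der_exp R D p0 p1 (der_exp R D' p0 p1 u)))
      \<and> is_Aut R (der_exp R D)
      \<and> ((\<forall>p0\<in>Ob R. \<forall>p1\<in>Ob R. \<forall>u\<in>Hom R p0 p1. der_exp R D p0 p1 u = der_exp R D' p0 p1 u)
           \<longrightarrow> (\<forall>p0\<in>Ob R. \<forall>p1\<in>Ob R. \<forall>u\<in>Hom R p0 p1. D p0 p1 u = D' p0 p1 u))"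
proof -
  interpret filtered_KSAC_over_Q R
    by unfold_locales (fact ksac filt C3 KQ C2)+
  show ?thesis
    using der_add_cond_i_iii[OF D D'] der_exp_der_add[OF D D'] der_exp_Aut[OF D] der_exp_injective[OF D D']
    by blast
qed

end
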